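(* There exists a sequence of normalized triples $(\mathbb C,f_n,0)$, $n\in\mathbb N$, where each $f_n$ is an entire function of infinite order, that converges in the sense of Carathéodory to a normalized triple $(\mathbb C,f,0)$ in which $f$ is an entire function of order $1$.
   Context: A surface spread over the sphere is a pair $(S,f)$ with $S$ an open topological surface and $f:S\to\hat{\mathbb C}$ continuous, open and discrete. A pointed surface is $(S,f,w)$ with $w$ not a critical point of $f$. A triple is normalized if $S=D_R=\{|z|<R\}$ for some $R\in(0,+\infty]$ (so $D_\infty=\mathbb C$), $w=0$ and $f^{\#}(0)=1$ where $f^{\#}=f'/(1+|f|^2)$. $(S_1,f_1,w_1)\sim(S_2,f_2,w_2)$ if there is a homeomorphism $h$ with $h(w_1)=w_2$, $f_1=f_2\circ h$; $(S_1,f_1,w_1)\subset(S_2,f_2,w_2)$ if there is a continuous injective $\phi$ with $\phi(w_1)=w_2$, $f_1=f_2\circ\phi$; $T$ is maximal if $T\subset T_1$ implies $T\sim T_1$. Standing assumption on sequences: there exist $p\in\hat{\mathbb C}$, $r>0$ and domains $W_n\ni w_n$ with $f_n(w_n)=p$ and $f_n:W_n\to B(p,r)$ a homeomorphism. A kernel of $(S_n,f_n,w_n)$ is a pointed $(S,f,w)$ such that (1) there is a discrete $E\subset S$, $w\notin E$, such that for every compact $K\subset S\setminus E$ with $w\in K$ there is $N$ such that for all $n>N$ there is a continuous embedding $\phi_{K,n}:K\to S_n$ with $\phi_{K,n}(w)=w_n$ and $f_n\circ\phi_{K,n}=f$ on $K$; (2) the triple satisfying (1) is maximal in the sense of $\subset$.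 The sequence converges in the sense of Carathéodory to $(S,f,w)$ if $(S,f,w)$ is a kernel of every subsequence. *)

theory Defs
  imports "HOL-Analysis.Analysis"
begin

text \<open>The extended plane is modelled as \<open>complex option\<close> (\<open>None\<close> = \<infinity>). Its topology is the
pullback of the Euclidean topology of \<open>\<complex> \<times> \<real> = \<real>^3\<close> under the (injective) inverse
stereographic projection onto the unit sphere.\<close>

definition sphere_emb :: "complex option \<Rightarrow> complex \<times> real" where
  "sphere_emb p = (case p of None \<Rightarrow> (0, 1)
     | Some z \<Rightarrow> (2 * z / complex_of_real (1 + (cmod z)^2), ((cmod z)^2 - 1) / ((cmod z)^2 + 1)))"

definition riemann_sphere :: "complex option topology" where
  "riemann_sphere = pullback_topology UNIV sphere_emb euclidean"

definition sball :: "complex option \<Rightarrow> real \<Rightarrow> complex option set" where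
  "sball p r = {q. dist (sphere_emb p) (sphere_emb q) < r}"

definition open_surface :: "'a topology \<Rightarrow> bool" where
  "open_surface S \<longleftrightarrow> connected_space S \<and> Hausdorff_space S \<and> second_countable S \<and>
     \<not> compact_space S \<and>
     (\<forall>x\<in>topspace S. \<exists>U. openin S U \<and> x \<in> U \<and>
        (\<exists>V::complex set. open V \<and> subtopology S U homeomorphic_space top_of_set V))"

definition discrete_subset :: "'a topology \<Rightarrow> 'a set \<Rightarrow> bool" where
  "discrete_subset S E \<longleftrightarrow> E \<subseteq> topspace S \<and>
     (\<forall>x\<in>topspace S. \<exists>U. openin S U \<and> x \<in> U \<and> finite (U \<inter> E))"

definition spread_surface :: "'a topology \<Rightarrow> ('a \<Rightarrow> complex option) \<Rightarrow> bool" where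
  "spread_surface S f \<longleftrightarrow> open_surface S \<and> continuous_map S riemann_sphere f \<and>
     open_map S riemann_sphere f \<and>
     (\<forall>q. discrete_subset S {x \<in> topspace S. f x = q})"

text \<open>Critical point: a point at which \<open>f\<close> is not a local homeomorphism, i.e. not locally injective.\<close>
definition critical_point :: "'a topology \<Rightarrow> ('a \<Rightarrow> complex option) \<Rightarrow> 'a \<Rightarrow> bool" where
  "critical_point S f w \<longleftrightarrow> \<not> (\<exists>U. openin S U \<and> w \<in> U \<and> inj_on f U)"

definition pointed_surface :: "'a topology \<Rightarrow> ('a \<Rightarrow> complex option) \<Rightarrow> 'a \<Rightarrow> bool" where
  "pointed_surface S f w \<longleftrightarrow> spread_surface S f \<and> w \<in> topspace S \<and> \<not> critical_point S f w"

definition psub :: "'a topology \<Rightarrow> ('a \<Rightarrow> complex option) \<Rightarrow> 'a \<Rightarrow>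
                     'b topology \<Rightarrow> ('b \<Rightarrow> complex option) \<Rightarrow> 'b \<Rightarrow> bool" where
  "psub S1 f1 w1 S2 f2 w2 \<longleftrightarrow> (\<exists>\<phi>. continuous_map S1 S2 \<phi> \<and> inj_on \<phi> (topspace S1) \<and>
      \<phi> w1 = w2 \<and> (\<forall>x\<in>topspace S1. f1 x = f2 (\<phi> x)))"

definition pequiv :: "'a topology \<Rightarrow> ('a \<Rightarrow> complex option) \<Rightarrow> 'a \<Rightarrow>
                     'b topology \<Rightarrow> ('b \<Rightarrow> complex option) \<Rightarrow> 'b \<Rightarrow> bool" where
  "pequiv S1 f1 w1 S2 f2 w2 \<longleftrightarrow> (\<exists>h. homeomorphic_map S1 S2 h \<and>
      h w1 = w2 \<and> (\<forall>x\<in>topspace S1. f1 x = f2 (h x)))"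

definition standing_assumption :: "(nat \<Rightarrow> 'a topology) \<Rightarrow> (nat \<Rightarrow> 'a \<Rightarrow> complex option) \<Rightarrow>
     (nat \<Rightarrow> 'a) \<Rightarrow> bool" where
  "standing_assumption Sn fn wn \<longleftrightarrow> (\<exists>p r W. r > 0 \<and> (\<forall>n.
      openin (Sn n) (W n) \<and> connectedin (Sn n) (W n) \<and> wn n \<in> W n \<and> fn n (wn n) = p \<and>
      homeomorphic_map (subtopology (Sn n) (W n)) (subtopology riemann_sphere (sball p r)) (fn n)))"

definition kernel_cond :: "(nat \<Rightarrow> 'a topology) \<Rightarrow> (nat \<Rightarrow> 'a \<Rightarrow> complex option) \<Rightarrow> (nat \<Rightarrow> 'a) \<Rightarrow>
     'b topology \<Rightarrow> ('b \<Rightarrow> complex option) \<Rightarrow> 'b \<Rightarrow> bool" where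
  "kernel_cond Sn fn wn S f w \<longleftrightarrow> pointed_surface S f w \<and>
     (\<exists>E. discrete_subset S E \<and> w \<notin> E \<and>
        (\<forall>K. compactin S K \<and> K \<subseteq> topspace S - E \<and> w \<in> K \<longrightarrow>
           (\<exists>N. \<forall>n>N. \<exists>\<phi>. continuous_map (subtopology S K) (Sn n) \<phi> \<and> inj_on \<phi> K \<and>
                \<phi> (w) = wn n \<and> (\<forall>x\<in>K. fn n (\<phi> x) = f x))))"

text \<open>Every surface
is homeomorphic to one whose underlying point set is a subset of the type \<open>complex\<close>
(cardinality of the continuum), so competitors are taken with carrier in \<open>complex\<close>.\<close>
definition is_kernel :: "(nat \<Rightarrow> 'a topology) \<Rightarrow> (nat \<Rightarrow> 'a \<Rightarrow> complex option) \<Rightarrow> (nat \<Rightarrow> 'a) \<Rightarrow>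
     'b topology \<Rightarrow> ('b \<Rightarrow> complex option) \<Rightarrow> 'b \<Rightarrow> bool" where
  "is_kernel Sn fn wn S f w \<longleftrightarrow> kernel_cond Sn fn wn S f w \<and>
     (\<forall>(S1::complex topology) f1 w1. kernel_cond Sn fn wn S1 f1 w1 \<and> psub S f w S1 f1 w1
         \<longrightarrow> pequiv S f w S1 f1 w1)"

definition caratheodory_converges :: "(nat \<Rightarrow> 'a topology) \<Rightarrow> (nat \<Rightarrow> 'a \<Rightarrow> complex option) \<Rightarrow>
     (nat \<Rightarrow> 'a) \<Rightarrow> 'b topology \<Rightarrow> ('b \<Rightarrow> complex option) \<Rightarrow> 'b \<Rightarrow> bool" where
  "caratheodory_converges Sn fn wn S f w \<longleftrightarrow> standing_assumption Sn fn wn \<and>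
     (\<forall>r::nat \<Rightarrow> nat. strict_mono r \<longrightarrow> is_kernel (Sn \<circ> r) (fn \<circ> r) (wn \<circ> r) S f w)"

definition normalized_entire_triple :: "(complex \<Rightarrow> complex) \<Rightarrow> bool" where
  "normalized_entire_triple f \<longleftrightarrow> f holomorphic_on UNIV \<and>
     pointed_surface (euclidean :: complex topology) (Some \<circ> f) 0 \<and>
     deriv f 0 / complex_of_real (1 + (cmod (f 0))^2) = 1"

definition max_modulus :: "(complex \<Rightarrow> complex) \<Rightarrow> real \<Rightarrow> real" where
  "max_modulus f r = (SUP z\<in>sphere 0 r. cmod (f z))"

text \<open>Order \<open>\<rho> = limsup_{r\<rightarrow>\<infinity>} log log M(r) / log r\<close> (the \<open>max\<close> with \<open>e\<close> only matters for bounded,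
i.e. constant, \<open>f\<close>, giving order 0).\<close>
definition entire_order :: "(complex \<Rightarrow> complex) \<Rightarrow> ereal" where
  "entire_order f = Limsup at_top (\<lambda>r::real. ereal (ln (ln (max (exp 1) (max_modulus f r))) / ln r))"

end

theory Submission
  imports Defs "HOL-Complex_Analysis.Complex_Analysis" "HOL-Real_Asymp.Real_Asymp"
begin

lemma perturbed_identity_inj_on:
  fixes h :: "'a::real_normed_vector \<Rightarrow> 'a"
  assumes "\<And>a b. a \<in> S \<Longrightarrow> b \<in> S \<Longrightarrow> norm (h a - h b) \<le> norm (a - b) / 2"
  shows "inj_on (\<lambda>z. z + h z) S"
proof (rule inj_onI)
  fix a b assume "a \<in> S" "b \<in> S" "a + h a = b + h b"
  then have "a - b = h b - h a" by (simp add: algebra_simps)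
  then have "norm (a - b) = norm (h a - h b)" by (simp add: norm_minus_commute)
  also have "\<dots> \<le> norm (a - b) / 2"
    using assms \<open>a \<in> S\<close> \<open>b \<in> S\<close> by blast
  finally show "a = b" by simp
qed

lemma perturbed_identity_image:
  fixes h :: "'a::banach \<Rightarrow> 'a"
  assumes contr: "\<And>a b. a \<in> cball 0 R \<Longrightarrow> b \<in> cball 0 R \<Longrightarrow> norm (h a - h b) \<le> norm (a - b) / 2"
    and small: "\<And>z. z \<in> cball 0 R \<Longrightarrow> norm (h z) \<le> R / 2"
  shows "cball 0 (R / 2) \<subseteq> (\<lambda>z. z + h z) ` cball 0 R"
proof
  fix w :: 'a assume w: "w \<in> cball 0 (R / 2)"
  then have "norm w \<le> R / 2" by simp
  then have "0 \<le> R" using norm_ge_zero[of w] by linarith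
  have "\<exists>!z. z \<in> cball 0 R \<and> w - h z = z"
  proof (rule Banach_fix[where c = "1/2"])
    show "complete (cball (0::'a) R)" by (simp add: complete_eq_closed)
    show "(\<lambda>z. w - h z) ` cball 0 R \<subseteq> cball 0 R"
    proof clarify
      fix z assume "z \<in> cball (0::'a) R"
      then show "w - h z \<in> cball 0 R"
        using w small[of z] norm_triangle_ineq4[of w "h z"] by simp
    qed
    show "dist (w - h x) (w - h y) \<le> 1/2 * dist x y" if "x \<in> cball 0 R" "y \<in> cball 0 R" for x y
      using contr[OF that] by (simp add: dist_norm norm_minus_commute)
  qed (use \<open>0 \<le> R\<close> in auto)
  then obtain z where "z \<in> cball 0 R" "w = z + h z"
    by (metis diff_eq_eq)
  then show "w \<in> (\<lambda>z. z + h z) ` cball 0 R" by blast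
qed

definition perturb :: "real \<Rightarrow> complex \<Rightarrow> complex" where
  "perturb \<epsilon> z = z + of_real \<epsilon> * (exp z - 1 - z)"

definition perturbed_exp :: "real \<Rightarrow> complex \<Rightarrow> complex" where
  "perturbed_exp \<epsilon> z = exp (perturb \<epsilon> z) - 1"

lemma perturbed_exp_0: "perturbed_exp 0 = (\<lambda>z. exp z - 1)"
  by (simp add: fun_eq_iff perturbed_exp_def perturb_def)

lemma perturb_0 [simp]: "perturb \<epsilon> 0 = 0"
  by (simp add: perturb_def)

lemma perturbed_exp_at_0 [simp]: "perturbed_exp \<epsilon> 0 = 0"
  by (simp add: perturbed_exp_def)

lemma holomorphic_perturbed_exp: "perturbed_exp \<epsilon> holomorphic_on UNIV"
  unfolding perturbed_exp_def perturb_def by (intro holomorphic_intros)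

lemma deriv_perturbed_exp_0: "deriv (perturbed_exp \<epsilon>) 0 = 1"
proof -
  have "(perturbed_exp \<epsilon> has_field_derivative exp (perturb \<epsilon> 0) * (1 + of_real \<epsilon> * (exp 0 - 1))) (at 0)"
    unfolding perturbed_exp_def perturb_def by (auto intro!: derivative_eq_intros)
  then show ?thesis by (simp add: DERIV_imp_deriv)
qed

lemma norm_exp_minus_one_le:
  fixes z :: complex
  assumes "norm z \<le> R"
  shows "norm (exp z - 1) \<le> exp R + 1"
proof -
  have "norm (exp z) \<le> exp R"
    using assms norm_exp[of z] by (meson exp_le_cancel_iff order_trans)
  moreover have "norm (exp z - 1) \<le> norm (exp z) + 1"
    using norm_triangle_ineq4[of "exp z" 1] by (simp only: norm_one)
  ultimately show ?thesis by linarith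
qed

lemma exp_minus_one_minus_id_lipschitz:
  fixes a b :: complex
  assumes "a \<in> cball 0 R" "b \<in> cball 0 R"
  shows "norm ((exp a - 1 - a) - (exp b - 1 - b)) \<le> (exp R + 1) * norm (a - b)"
proof (rule field_differentiable_bound
    [where f = "\<lambda>z. exp z - 1 - z" and f' = "\<lambda>z. exp z - 1" and S = "cball 0 R"])
  fix z assume "z \<in> cball (0::complex) R"
  then show "norm (exp z - 1) \<le> exp R + 1" by (intro norm_exp_minus_one_le) simp
qed (use assms in \<open>auto intro!: derivative_eq_intros\<close>)

definition small_perturbation :: "real \<Rightarrow> real \<Rightarrow> bool" where
  "small_perturbation \<epsilon> R \<longleftrightarrow> 0 \<le> \<epsilon> \<and> 1 \<le> R \<and> \<epsilon> * (exp R + 1 + R) \<le> 1/2"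

lemma small_perturbation_contraction:
  fixes a b :: complex
  assumes "small_perturbation \<epsilon> R" "a \<in> cball 0 R" "b \<in> cball 0 R"
  shows "norm (of_real \<epsilon> * (exp a - 1 - a) - of_real \<epsilon> * (exp b - 1 - b)) \<le> norm (a - b) / 2"
proof -
  have \<epsilon>: "0 \<le> \<epsilon>" "\<epsilon> * (exp R + 1) \<le> \<epsilon> * (exp R + 1 + R)" "\<epsilon> * (exp R + 1 + R) \<le> 1/2"
    using assms(1) unfolding small_perturbation_def by (simp_all add: mult_left_mono)
  have "norm (of_real \<epsilon> * (exp a - 1 - a) - of_real \<epsilon> * (exp b - 1 - b))
      = \<epsilon> * norm ((exp a - 1 - a) - (exp b - 1 - b))"
    using \<epsilon> by (simp flip: right_diff_distrib add: norm_mult)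
  also have "\<dots> \<le> \<epsilon> * ((exp R + 1) * norm (a - b))"
    using \<epsilon> exp_minus_one_minus_id_lipschitz[OF assms(2,3)] by (intro mult_left_mono)
  also have "\<dots> \<le> norm (a - b) / 2"
    using mult_right_mono[OF order_trans[OF \<epsilon>(2,3)] norm_ge_zero[of "a - b"]] by (simp add: mult.assoc)
  finally show ?thesis .
qed

lemma small_perturbation_bound:
  fixes z :: complex
  assumes "small_perturbation \<epsilon> R" "z \<in> cball 0 R"
  shows "norm (of_real \<epsilon> * (exp z - 1 - z)) \<le> R / 2"
proof -
  have "norm (exp z - 1 - z) \<le> exp R + 1 + R"
    using norm_triangle_ineq4[of "exp z - 1" z] norm_exp_minus_one_le[of z R] assms(2) by simp
  moreover have "0 \<le> \<epsilon>" using assms(1) by (simp add: small_perturbation_def)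
  ultimately have "norm (of_real \<epsilon> * (exp z - 1 - z)) \<le> \<epsilon> * (exp R + 1 + R)"
    by (simp add: norm_mult mult_left_mono)
  then show ?thesis using assms(1) by (simp add: small_perturbation_def)
qed

lemma inj_on_perturb:
  assumes "small_perturbation \<epsilon> R"
  shows "inj_on (perturb \<epsilon>) (cball 0 R)"
  unfolding perturb_def[abs_def]
  by (intro perturbed_identity_inj_on small_perturbation_contraction[OF assms])



lemma perturb_image:
  assumes "small_perturbation \<epsilon> R"
  shows "cball 0 (R / 2) \<subseteq> perturb \<epsilon> ` cball 0 R"
  using small_perturbation_contraction[OF assms] small_perturbation_bound[OF assms]
  unfolding perturb_def[abs_def] by (rule perturbed_identity_image)

definition perturb_inv :: "real \<Rightarrow> real \<Rightarrow> complex \<Rightarrow> complex" where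
  "perturb_inv \<epsilon> R = the_inv_into (cball 0 R) (perturb \<epsilon>)"

lemma perturb_inv:
  assumes "small_perturbation \<epsilon> R" "norm w \<le> R / 2"
  shows "perturb_inv \<epsilon> R w \<in> cball 0 R" "perturb \<epsilon> (perturb_inv \<epsilon> R w) = w"
proof -
  have "w \<in> perturb \<epsilon> ` cball 0 R" using perturb_image[OF assms(1)] assms(2) by auto
  then show "perturb_inv \<epsilon> R w \<in> cball 0 R" "perturb \<epsilon> (perturb_inv \<epsilon> R w) = w"
    unfolding perturb_inv_def
    by (rule the_inv_into_into[OF inj_on_perturb[OF assms(1)] _ order_refl],
        rule f_the_inv_into_f[OF inj_on_perturb[OF assms(1)]])
qed

lemma perturb_inv_perturb:
  "small_perturbation \<epsilon> R \<Longrightarrow> z \<in> cball 0 R \<Longrightarrow> perturb_inv \<epsilon> R (perturb \<epsilon> z) = z"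
  by (simp add: perturb_inv_def inj_on_perturb the_inv_into_f_f)

lemma perturb_inv_0: "small_perturbation \<epsilon> R \<Longrightarrow> perturb_inv \<epsilon> R 0 = 0"
  using perturb_inv_perturb[of \<epsilon> R 0] by (simp add: small_perturbation_def)

lemma continuous_on_perturb_inv:
  assumes "small_perturbation \<epsilon> R"
  shows "continuous_on (cball 0 (R / 2)) (perturb_inv \<epsilon> R)"
proof -
  have "continuous_on (cball 0 R) (perturb \<epsilon>)"
    unfolding perturb_def[abs_def] by (intro continuous_intros)
  then have "continuous_on (perturb \<epsilon> ` cball 0 R) (the_inv_into (cball 0 R) (perturb \<epsilon>))"
    by (rule continuous_on_inv_into) (simp_all add: inj_on_perturb[OF assms])

  then show ?thesis
    unfolding perturb_inv_def by (rule continuous_on_subset) (rule perturb_image[OF assms])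
qed

lemma perturbed_exp_perturb_inv:
  "small_perturbation \<epsilon> R \<Longrightarrow> norm w \<le> R / 2 \<Longrightarrow> perturbed_exp \<epsilon> (perturb_inv \<epsilon> R w) = exp w - 1"
  by (simp add: perturbed_exp_def perturb_inv)

lemma norm_le_max_modulus:
  assumes "continuous_on UNIV f"
  shows "norm (f z) \<le> max_modulus f (norm z)"
proof -
  have "compact ((\<lambda>z. norm (f z)) ` sphere 0 (norm z))"
    by (intro compact_continuous_image continuous_intros continuous_on_subset[OF assms]) auto
  then show ?thesis
    unfolding max_modulus_def by (intro cSUP_upper bounded_imp_bdd_above compact_imp_bounded) auto
qed

lemma max_modulus_le:
  assumes "0 \<le> r" "\<And>z. norm z = r \<Longrightarrow> norm (f z) \<le> B"
  shows "max_modulus f r \<le> B"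
  unfolding max_modulus_def using assms by (intro cSUP_least) auto

lemma entire_order_eqI:
  assumes "((\<lambda>r. ereal (ln (ln (max (exp 1) (max_modulus f r))) / ln r)) \<longlongrightarrow> L) at_top"
  shows "entire_order f = L"
  unfolding entire_order_def using assms by (intro lim_imp_Limsup) simp_all

lemma ln_ln_mono:
  assumes "exp 1 \<le> x" "x \<le> (y::real)"
  shows "ln (ln x) \<le> ln (ln y)"
proof -
  have "0 < x" using assms(1) exp_gt_zero[of 1] by linarith
  then have "1 \<le> ln x" using assms(1) by (metis ln_exp ln_le_cancel_iff exp_gt_zero)
  moreover have "ln x \<le> ln y" using \<open>0 < x\<close> assms(2) by simp
  ultimately show ?thesis by simp
qed

lemma exp_1_le_exp_minus_one: "2 \<le> r \<Longrightarrow> exp 1 \<le> exp r - (1::real)"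
proof -
  assume "2 \<le> r"
  have e: "2 \<le> exp (1::real)" using exp_ge_add_one_self[of 1] by simp
  then have "2 * exp 1 \<le> exp 1 * exp (1::real)" by (simp add: mult_right_mono)
  then have "exp 1 + 1 \<le> exp 1 * exp (1::real)" using e by linarith
  also have "\<dots> = exp 2" by (simp flip: exp_add)
  also have "\<dots> \<le> exp r" using \<open>2 \<le> r\<close> by simp
  finally show ?thesis by simp
qed

lemma norm_exp_of_real_minus_one:
  assumes "0 \<le> r"
  shows "norm (exp (complex_of_real r) - 1) = exp r - 1"
proof -
  have "exp (complex_of_real r) - 1 = of_real (exp r - 1)" by (simp add: exp_of_real)
  moreover have "1 \<le> exp r" using assms by simp
  ultimately show ?thesis by (simp del: of_real_diff)

qed

lemma entire_order_exp_minus_one: "entire_order (\<lambda>z. exp z - 1) = 1"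
proof -
  let ?M = "max_modulus (\<lambda>z. exp z - 1)"
  let ?h = "\<lambda>r. ln (ln (max (exp 1) (?M r))) / ln r"
  have bounds: "ln (ln (exp r - 1)) / ln r \<le> ?h r \<and> ?h r \<le> ln (ln (exp r + 1)) / ln r"
    if r: "2 \<le> r" for r
  proof -
    have "exp r - 1 \<le> ?M r"
      using norm_le_max_modulus[of "\<lambda>z. exp z - 1" "of_real r"] r
      by (simp add: norm_exp_of_real_minus_one continuous_intros)
    moreover have "?M r \<le> exp r + 1"
      using r by (intro max_modulus_le norm_exp_minus_one_le) auto
    ultimately have "ln (ln (exp r - 1)) \<le> ln (ln (max (exp 1) (?M r)))"
      and "ln (ln (max (exp 1) (?M r))) \<le> ln (ln (exp r + 1))"
      using exp_1_le_exp_minus_one[OF r] by (auto intro!: ln_ln_mono)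
    moreover have "0 < ln r" using r by simp
    ultimately show ?thesis by (auto intro: divide_right_mono)
  qed
  have ev: "eventually (\<lambda>r. ln (ln (exp r - 1)) / ln r \<le> ?h r \<and> ?h r \<le> ln (ln (exp r + 1)) / ln r) at_top"
    by (rule eventually_mono[OF eventually_ge_at_top[of 2] bounds])
  have lower: "((\<lambda>r::real. ln (ln (exp r - 1)) / ln r) \<longlongrightarrow> 1) at_top"
    and upper: "((\<lambda>r::real. ln (ln (exp r + 1)) / ln r) \<longlongrightarrow> 1) at_top"
    by real_asymp+
  have "(?h \<longlongrightarrow> 1) at_top"
    by (rule tendsto_sandwich[OF eventually_mono[OF ev conjunct1] eventually_mono[OF ev conjunct2] lower upper])
  then show ?thesis
    by (intro entire_order_eqI) (simp add: lim_ereal one_ereal_def)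
qed

lemma perturbed_exp_of_real:
  "perturbed_exp \<epsilon> (of_real r) = exp (of_real (r + \<epsilon> * (exp r - 1 - r))) - 1"
  by (simp add: perturbed_exp_def perturb_def exp_of_real)


lemma ln_ln_max_modulus_perturbed_exp:
  assumes "0 < \<epsilon>" "2 \<le> r"
  shows "ln (\<epsilon> * (exp r - 1 - r)) \<le> ln (ln (max (exp 1) (max_modulus (perturbed_exp \<epsilon>) r)))"
proof -
  define q where "q = exp r - 1 - r"
  define p where "p = r + \<epsilon> * q"
  have "0 < r\<^sup>2 / 2" using assms(2) by simp
  then have "0 < q"
    using exp_lower_Taylor_quadratic[of r] assms(2) unfolding q_def by linarith
  then have "0 < \<epsilon> * q" using assms(1) by simp
  then have "2 \<le> p" using assms(2) by (simp add: p_def)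
  have "exp (p - 1) \<le> exp p - 1"
  proof -
    have "1 \<le> exp (p - 1)" "1 \<le> exp 1 - (1::real)"
      using \<open>2 \<le> p\<close> exp_ge_add_one_self[of "1::real"] by auto
    then have "1 \<le> exp (p - 1) * (exp 1 - 1)"
      using mult_mono[of 1 "exp (p - 1)" 1 "exp 1 - 1"] by simp
    moreover have "exp p = exp (p - 1) * exp 1" by (simp flip: exp_add)
    ultimately show ?thesis by (simp add: algebra_simps)
  qed
  also have "exp p - 1 = norm (perturbed_exp \<epsilon> (of_real r))"
    unfolding perturbed_exp_of_real using \<open>2 \<le> p\<close>
    by (subst norm_exp_of_real_minus_one) (auto simp: p_def q_def)
  also have "\<dots> \<le> max_modulus (perturbed_exp \<epsilon>) r"
    using norm_le_max_modulus[of "perturbed_exp \<epsilon>" "of_real r"] assms(2)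
    by (simp add: holomorphic_on_imp_continuous_on holomorphic_perturbed_exp)
  finally have "ln (ln (exp (p - 1))) \<le> ln (ln (max (exp 1) (max_modulus (perturbed_exp \<epsilon>) r)))"
    using \<open>2 \<le> p\<close> by (intro ln_ln_mono) auto
  moreover have "ln (\<epsilon> * q) \<le> ln (ln (exp (p - 1)))"
    using \<open>0 < \<epsilon> * q\<close> assms(2) by (simp add: p_def)
  ultimately show ?thesis by (simp add: q_def)
qed

lemma entire_order_perturbed_exp:
  assumes "0 < \<epsilon>"
  shows "entire_order (perturbed_exp \<epsilon>) = \<infinity>"
proof -
  let ?h = "\<lambda>r. ln (ln (max (exp 1) (max_modulus (perturbed_exp \<epsilon>) r))) / ln r"
  have "ln (\<epsilon> * (exp r - 1 - r)) / ln r \<le> ?h r" if "2 \<le> r" for r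
    using ln_ln_max_modulus_perturbed_exp[OF assms that] that by (simp add: divide_right_mono)
  then have "eventually (\<lambda>r. ln (\<epsilon> * (exp r - 1 - r)) / ln r \<le> ?h r) at_top"
    by (rule eventually_mono[OF eventually_ge_at_top[of 2]])
  moreover have "filterlim (\<lambda>r::real. ln (\<epsilon> * (exp r - 1 - r)) / ln r) at_top at_top"
    using assms by real_asymp
  ultimately have "filterlim ?h at_top at_top"
    by (rule filterlim_at_top_mono[rotated])
  then show ?thesis
    by (intro entire_order_eqI) (simp add: tendsto_PInfty_eq_at_top)
qed


lemma topspace_riemann_sphere [simp]: "topspace riemann_sphere = UNIV"
  by (simp add: riemann_sphere_def topspace_pullback_topology)

lemma sphere_emb_Some:
  "sphere_emb (Some z) = (2 * z / of_real (1 + (cmod z)\<^sup>2), ((cmod z)\<^sup>2 - 1) / ((cmod z)\<^sup>2 + 1))"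
  by (simp add: sphere_emb_def)

lemma continuous_map_Some_comp:
  assumes "continuous_on UNIV g"
  shows "continuous_map euclidean riemann_sphere (Some \<circ> g)"
  unfolding riemann_sphere_def
proof (rule continuous_map_pullback')
  have "complex_of_real (1 + (cmod z)\<^sup>2) \<noteq> 0" "(cmod z)\<^sup>2 + 1 \<noteq> 0" for z
    by (metis of_real_eq_0_iff add_pos_nonneg zero_less_one zero_le_power2 less_irrefl add.commute)+
  then have "continuous_on UNIV (\<lambda>z. sphere_emb (Some z))"
    unfolding sphere_emb_Some by (intro continuous_intros) blast+
  then have "continuous_on UNIV ((\<lambda>z. sphere_emb (Some z)) \<circ> g)"
    by (intro continuous_on_compose[OF assms]) (rule continuous_on_subset, auto)
  then show "continuous_map euclidean euclidean (sphere_emb \<circ> (Some \<circ> g))"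
    by (simp add: o_def)
qed simp

lemma openin_riemann_sphere_image_Some:
  assumes "open A"
  shows "openin riemann_sphere (Some ` A)"
  unfolding riemann_sphere_def openin_pullback_topology
proof (intro exI conjI)
  \<comment> \<open>stereographic projection from the north pole \<open>(0, 1)\<close> = \<open>sphere_emb None\<close>\<close>
  define st where "st p = fst p / complex_of_real (1 - snd p)" for p :: "complex \<times> real"
  let ?U = "{p. snd p < 1} \<inter> st -` A"
  have o: "open {p::complex \<times> real. snd p < 1}"
    by (intro open_Collect_less continuous_intros)
  moreover have "continuous_on {p. snd p < 1} st"
    unfolding st_def by (intro continuous_intros) auto
  ultimately have "open (st -` A \<inter> {p. snd p < 1})"
    using continuous_on_open_vimage[OF o] assms by blast
  then show "openin euclidean ?U" by (simp add: Int_commute)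


  have "snd (sphere_emb (Some z)) < 1 \<and> st (sphere_emb (Some z)) = z" for z
  proof -
    define s where "s = (cmod z)\<^sup>2"
    define c where "c = complex_of_real (1 + s)"
    have "0 \<le> s" by (simp add: s_def)
    then have c: "c \<noteq> 0" unfolding c_def of_real_eq_0_iff by linarith
    have e: "1 - (s - 1) / (s + 1) = 2 / (1 + s)" "(s - 1) / (s + 1) < 1"
      using \<open>0 \<le> s\<close> by (simp_all add: field_simps)
    have "st (sphere_emb (Some z)) = 2 * z / c / complex_of_real (2 / (1 + s))"
      unfolding st_def sphere_emb_Some fst_conv snd_conv s_def[symmetric] e(1) c_def ..
    also have "\<dots> = 2 * z / c / (2 / c)" by (simp add: c_def)
    also have "\<dots> = z" using c by (simp add: field_simps)
    finally show ?thesis using e(2) by (simp add: sphere_emb_Some flip: s_def)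
  qed
  then show "Some ` A = sphere_emb -` ?U \<inter> UNIV"
    by (auto simp: sphere_emb_def split: option.splits)

qed

lemma homeomorphic_map_Some:
  "homeomorphic_map (top_of_set A) (subtopology riemann_sphere (Some ` A)) Some"
proof (rule bijective_open_imp_homeomorphic_map)
  show "continuous_map (top_of_set A) (subtopology riemann_sphere (Some ` A)) Some"
    using continuous_map_Some_comp[of id]
    by (intro continuous_map_into_subtopology continuous_map_from_subtopology) auto
  show "open_map (top_of_set A) (subtopology riemann_sphere (Some ` A)) Some"
    unfolding open_map_def
  proof clarify
    fix U assume "openin (top_of_set A) U"
    then obtain V where "open V" "U = A \<inter> V" by (auto simp: openin_open)
    then show "openin (subtopology riemann_sphere (Some ` A)) (Some ` U)"
      using openin_riemann_sphere_image_Some[OF \<open>open V\<close>]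
      by (auto simp: openin_subtopology image_Int)
  qed
qed auto

lemma dist_sphere_emb_Some_0:
  "dist (sphere_emb (Some 0)) (sphere_emb (Some z)) = 2 * cmod z / sqrt (1 + (cmod z)\<^sup>2)"
proof -
  define s where "s = (cmod z)\<^sup>2"
  have "0 \<le> s" by (simp add: s_def)
  have "norm (2 * z / complex_of_real (1 + s)) = 2 * cmod z / (1 + s)"
    unfolding norm_divide norm_mult norm_of_real using \<open>0 \<le> s\<close> by simp
  moreover have "dist (-1) ((s - 1) / (s + 1)) = 2 * s / (1 + s)"
    using \<open>0 \<le> s\<close> by (simp add: dist_real_def field_simps)
  ultimately have "dist (sphere_emb (Some 0)) (sphere_emb (Some z)) =
      sqrt ((2 * cmod z / (1 + s))\<^sup>2 + (2 * s / (1 + s))\<^sup>2)"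
    by (simp add: sphere_emb_def dist_Pair_Pair flip: s_def)
  also have "(2 * cmod z / (1 + s))\<^sup>2 + (2 * s / (1 + s))\<^sup>2 = 4 * s * (1 + s) / (1 + s)\<^sup>2"
    by (simp add: power_divide power_mult_distrib add_divide_distrib s_def power2_eq_square algebra_simps)
  also have "\<dots> = (2 * cmod z / sqrt (1 + s))\<^sup>2"
    using \<open>0 \<le> s\<close> by (simp add: power_divide power_mult_distrib s_def power2_eq_square)
  finally show ?thesis by (simp add: s_def)
qed

lemma chordal_less_iff:
  assumes "0 \<le> a" "0 \<le> b"
  shows "2 * a / sqrt (1 + a\<^sup>2) < 2 * b / sqrt (1 + b\<^sup>2) \<longleftrightarrow> a < (b::real)"
proof -
  have sq: "x < y \<longleftrightarrow> x\<^sup>2 < y\<^sup>2" if "0 \<le> x" "0 \<le> y" for x y :: real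
    using that by (auto intro: power_less_imp_less_base power_strict_mono)
  have "2 * a / sqrt (1 + a\<^sup>2) < 2 * b / sqrt (1 + b\<^sup>2) \<longleftrightarrow> a * sqrt (1 + b\<^sup>2) < b * sqrt (1 + a\<^sup>2)"
    by (simp add: field_simps add_pos_nonneg)
  also have "\<dots> \<longleftrightarrow> (a * sqrt (1 + b\<^sup>2))\<^sup>2 < (b * sqrt (1 + a\<^sup>2))\<^sup>2"
    using assms by (intro sq) auto
  also have "\<dots> \<longleftrightarrow> a\<^sup>2 < b\<^sup>2"
    by (simp add: power_mult_distrib algebra_simps add_pos_nonneg)
  also have "\<dots> \<longleftrightarrow> a < b"
    using sq[OF assms] by simp
  finally show ?thesis .
qed


lemma sball_Some_0:
  assumes "0 \<le> \<rho>"
  shows "sball (Some 0) (2 * \<rho> / sqrt (1 + \<rho>\<^sup>2)) = Some ` ball 0 \<rho>"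
proof -
  have lt2: "2 * \<rho> / sqrt (1 + \<rho>\<^sup>2) < 2"
  proof -
    have "\<rho> < sqrt (1 + \<rho>\<^sup>2)" using real_sqrt_less_mono[of "\<rho>\<^sup>2" "1 + \<rho>\<^sup>2"] assms by simp
    then show ?thesis by (simp add: field_simps add_pos_nonneg)
  qed
  have "dist (sphere_emb (Some 0)) (sphere_emb None) = 2"
    by (simp add: sphere_emb_def dist_Pair_Pair dist_real_def)
  with lt2 show ?thesis
  proof (intro set_eqI)
    fix q :: "complex option"
    show "q \<in> sball (Some 0) (2 * \<rho> / sqrt (1 + \<rho>\<^sup>2)) \<longleftrightarrow> q \<in> Some ` ball 0 \<rho>"
    proof (cases q)
      case (Some z)
      then show ?thesis
        using chordal_less_iff[OF norm_ge_zero[of z] assms] by (auto simp: sball_def dist_sphere_emb_Some_0)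
    qed (use lt2 \<open>dist _ _ = 2\<close> in \<open>auto simp: sball_def\<close>)

  qed
qed

lemma open_surface_complex: "open_surface (euclidean :: complex topology)"
  unfolding open_surface_def
proof (intro conjI ballI)
  show "connected_space (euclidean :: complex topology)"
    using connectedin_topspace[of euclidean] connectedin_iff_connected by auto

  show "second_countable (euclidean :: complex topology)"
  proof -
    obtain \<B> :: "complex set set" where \<B>: "countable \<B>" "\<And>C. C \<in> \<B> \<Longrightarrow> open C"
      "\<And>S. open S \<Longrightarrow> \<exists>U. U \<subseteq> \<B> \<and> S = \<Union>U"
      using univ_second_countable by blast
    show ?thesis
      unfolding second_countable_def
    proof (intro exI[of _ \<B>] conjI allI impI ballI)
      fix U :: "complex set" and x assume "openin euclidean U \<and> x \<in> U"
      then obtain \<U> where "\<U> \<subseteq> \<B>" "U = \<Union>\<U>" "x \<in> U" using \<B>(3) by auto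
      then show "\<exists>V\<in>\<B>. x \<in> V \<and> V \<subseteq> U" by auto
    qed (use \<B> in auto)
  qed
  show "\<not> compact_space (euclidean :: complex topology)"
    by (simp add: compact_space_def compact_eq_bounded_closed not_bounded_UNIV)
  show "\<exists>U. openin euclidean U \<and> x \<in> U \<and>
          (\<exists>V::complex set. open V \<and> subtopology euclidean U homeomorphic_space top_of_set V)"
    for x :: complex

    by (intro exI[of _ UNIV] conjI) (simp_all add: homeomorphic_space_refl)

qed simp

lemma discrete_subset_euclideanI:
  assumes "\<And>x. \<not> x islimpt E"
  shows "discrete_subset euclidean E"
  unfolding discrete_subset_def
proof (intro conjI ballI)
  fix x
  obtain U where "open U" "x \<in> U" "\<And>y. y \<in> U \<Longrightarrow> y \<in> E \<Longrightarrow> y = x"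
    using assms[of x] unfolding islimpt_def by blast
  then have "U \<inter> E \<subseteq> {x}" by blast
  then show "\<exists>U. openin euclidean U \<and> x \<in> U \<and> finite (U \<inter> E)"
    using \<open>open U\<close> \<open>x \<in> U\<close> finite_subset by (intro exI[of _ U]) auto
qed simp

lemma not_islimpt_fibre_entire:
  fixes g :: "complex \<Rightarrow> complex"
  assumes hol: "g holomorphic_on UNIV" and nonconst: "\<not> g constant_on UNIV"
  shows "\<not> x islimpt {z. g z = c}"
proof
  assume lim: "x islimpt {z. g z = c}"
  have "(\<lambda>z. g z - c) holomorphic_on UNIV"
    by (intro holomorphic_intros hol)
  then have "g w - c = 0" for w
    by (rule analytic_continuation[OF _ open_UNIV connected_UNIV subset_UNIV UNIV_I lim]) auto
  then have "g constant_on UNIV"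
    unfolding constant_on_def by (intro exI[of _ c]) simp
  with nonconst show False ..
qed

lemma pointed_surface_entire:
  fixes g :: "complex \<Rightarrow> complex"
  assumes hol: "g holomorphic_on UNIV" and "deriv g 0 \<noteq> 0"
  shows "pointed_surface euclidean (Some \<circ> g) 0"
  unfolding pointed_surface_def spread_surface_def
proof (intro conjI allI)
  have nonconst: "\<not> g constant_on UNIV"
  proof
    assume "g constant_on UNIV"
    then have "g = (\<lambda>_. g 0)" by (auto simp: constant_on_def)
    then show False using \<open>deriv g 0 \<noteq> 0\<close> by (metis deriv_const)
  qed
  show "continuous_map euclidean riemann_sphere (Some \<circ> g)"
    by (rule continuous_map_Some_comp[OF holomorphic_on_imp_continuous_on[OF hol]])
  show "open_map euclidean riemann_sphere (Some \<circ> g)"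
    unfolding open_map_def image_comp[symmetric]
    using open_mapping_thm[OF hol open_UNIV connected_UNIV _ _ nonconst]
    by (auto intro: openin_riemann_sphere_image_Some)
  show "\<not> critical_point euclidean (Some \<circ> g) 0"
  proof -
    obtain r where "0 < r" "inj_on g (ball 0 r)"
      using has_complex_derivative_locally_injective[OF hol _ open_UNIV \<open>deriv g 0 \<noteq> 0\<close>] by blast
    then show ?thesis
      unfolding critical_point_def by (intro notI, elim notE, intro exI[of _ "ball 0 r"])
        (auto simp: inj_on_def)
  qed
  show "discrete_subset euclidean {x \<in> topspace euclidean. (Some \<circ> g) x = q}" for q
  proof (cases q)
    case (Some c)
    then show ?thesis
      using not_islimpt_fibre_entire[OF hol nonconst] by (simp add: discrete_subset_euclideanI)
  qed (simp add: discrete_subset_euclideanI)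
qed (simp_all add: open_surface_complex)

lemma normalized_perturbed_exp: "normalized_entire_triple (perturbed_exp \<epsilon>)"
  unfolding normalized_entire_triple_def
  using holomorphic_perturbed_exp deriv_perturbed_exp_0
  by (simp add: pointed_surface_entire)

lemma eventually_small_perturbation:
  assumes "es \<longlonglongrightarrow> 0" "\<And>n. 0 \<le> es n" "1 \<le> R"
  shows "eventually (\<lambda>n. small_perturbation (es n) R) sequentially"
proof -
  have "(\<lambda>n. es n * (exp R + 1 + R)) \<longlonglongrightarrow> 0"
    using assms(1) by (rule tendsto_mult_left_zero)
  then have "eventually (\<lambda>n. es n * (exp R + 1 + R) < 1/2) sequentially"
    by (rule order_tendstoD) simp
  then show ?thesis
    by (rule eventually_mono) (use assms(2,3) in \<open>simp add: small_perturbation_def\<close>)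
qed

lemma kernel_cond_perturbed_exp:
  assumes "es \<longlonglongrightarrow> 0" "\<And>n. 0 \<le> es n"
  shows "kernel_cond (\<lambda>n. euclidean) (\<lambda>n. Some \<circ> perturbed_exp (es n)) (\<lambda>n. 0)
           euclidean (Some \<circ> (\<lambda>z. exp z - 1)) 0"
  unfolding kernel_cond_def
proof (intro conjI exI[of _ "{}"] allI impI)
  show "pointed_surface euclidean (Some \<circ> (\<lambda>z. exp z - 1)) 0"
    using normalized_perturbed_exp[of 0] by (simp add: normalized_entire_triple_def perturbed_exp_0)
  show "discrete_subset euclidean ({}::complex set)"
    by (rule discrete_subset_euclideanI) simp
  fix K :: "complex set"
  assume "compactin euclidean K \<and> K \<subseteq> topspace euclidean - {} \<and> 0 \<in> K"
  then obtain B where B: "\<And>x. x \<in> K \<Longrightarrow> norm x \<le> B"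
    by (metis compactin_euclidean_iff compact_imp_bounded bounded_iff)
  define R where "R = max 1 (2 * B)"
  have "1 \<le> R" by (simp add: R_def)
  have KR: "K \<subseteq> cball 0 (R / 2)" using B by (force simp: R_def)
  obtain N where N: "\<And>n. N \<le> n \<Longrightarrow> small_perturbation (es n) R"
    using eventually_small_perturbation[OF assms \<open>1 \<le> R\<close>] by (auto simp: eventually_sequentially)
  show "\<exists>N. \<forall>n>N. \<exists>\<phi>. continuous_map (subtopology euclidean K) euclidean \<phi> \<and> inj_on \<phi> K \<and>
          \<phi> 0 = 0 \<and> (\<forall>x\<in>K. (Some \<circ> perturbed_exp (es n)) (\<phi> x) = (Some \<circ> (\<lambda>z. exp z - 1)) x)"
  proof (intro exI[of _ N] allI impI)
    fix n assume "N < n"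
    then have sp: "small_perturbation (es n) R" using N by simp
    have inv: "perturb (es n) (perturb_inv (es n) R x) = x" if "x \<in> K" for x
      using perturb_inv(2)[OF sp] KR that by auto
    show "\<exists>\<phi>. continuous_map (subtopology euclidean K) euclidean \<phi> \<and> inj_on \<phi> K \<and>
          \<phi> 0 = 0 \<and> (\<forall>x\<in>K. (Some \<circ> perturbed_exp (es n)) (\<phi> x) = (Some \<circ> (\<lambda>z. exp z - 1)) x)"
    proof (intro exI[of _ "perturb_inv (es n) R"] conjI ballI)
      show "continuous_map (subtopology euclidean K) euclidean (perturb_inv (es n) R)"
        using continuous_on_subset[OF continuous_on_perturb_inv[OF sp] KR] by simp
      show "inj_on (perturb_inv (es n) R) K"
        by (rule inj_on_inverseI[where g = "perturb (es n)"]) (rule inv)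
      show "perturb_inv (es n) R 0 = 0" by (rule perturb_inv_0[OF sp])
      show "(Some \<circ> perturbed_exp (es n)) (perturb_inv (es n) R x) = (Some \<circ> (\<lambda>z. exp z - 1)) x"
        if "x \<in> K" for x
        using perturbed_exp_perturb_inv[OF sp] KR that by auto
    qed
  qed
qed simp

lemma norm_ln_one_plus_le:

  fixes w :: complex
  assumes "norm w < 1/2"
  shows "norm (ln (1 + w)) \<le> 1" and "0 < Re (1 + w)"
proof -
  have "norm (ln (1 + w) - w) \<le> (norm w)\<^sup>2 / (1 - norm w)"
    using Ln_approx_linear[of w] assms by simp
  also have "\<dots> \<le> (1/2)\<^sup>2 / (1/2)"
    using assms by (intro frac_le power_mono) auto
  finally show "norm (ln (1 + w)) \<le> 1"
    using norm_triangle_ineq2[of "ln (1 + w)" w] assms by (simp add: power2_eq_square)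
  show "0 < Re (1 + w)" using assms abs_Re_le_cmod[of w] by simp
qed

lemma small_perturbation_2: "0 \<le> \<epsilon> \<Longrightarrow> \<epsilon> \<le> 1/30 \<Longrightarrow> small_perturbation \<epsilon> 2"
proof -
  assume \<epsilon>: "0 \<le> \<epsilon>" "\<epsilon> \<le> 1/30"
  have "exp (2::real) = exp 1 * exp 1" by (simp flip: exp_add)
  also have "\<dots> \<le> 3 * 3" using exp_le by (intro mult_mono) auto
  finally have "\<epsilon> * (exp 2 + 1 + 2) \<le> 1/30 * 12"
    using \<epsilon> by (intro mult_mono) auto
  then show ?thesis using \<epsilon> by (simp add: small_perturbation_def)
qed

lemma perturbed_exp_right_inverse:
  assumes "0 \<le> \<epsilon>" "\<epsilon> \<le> 1/30"
  shows "continuous_on (ball 0 (1/2)) (\<lambda>w. perturb_inv \<epsilon> 2 (ln (1 + w)))"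
    and "w \<in> ball 0 (1/2) \<Longrightarrow> perturbed_exp \<epsilon> (perturb_inv \<epsilon> 2 (ln (1 + w))) = w"
proof -
  have sp: "small_perturbation \<epsilon> 2" using small_perturbation_2[OF assms] .
  have "1 + w \<notin> \<real>\<^sub>\<le>\<^sub>0" if "w \<in> ball 0 (1/2)" for w :: complex
    using norm_ln_one_plus_le(2)[of w] that by (auto simp: complex_nonpos_Reals_iff)
  then have "continuous_on (ball 0 (1/2)) (\<lambda>w::complex. ln (1 + w))"
    by (intro continuous_intros) blast
  moreover have "(\<lambda>w::complex. ln (1 + w)) ` ball 0 (1/2) \<subseteq> cball 0 (2/2)"
    using norm_ln_one_plus_le(1) by auto
  ultimately show "continuous_on (ball 0 (1/2)) (\<lambda>w. perturb_inv \<epsilon> 2 (ln (1 + w)))"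
    by (rule continuous_on_compose2[OF continuous_on_perturb_inv[OF sp]])
  assume w: "w \<in> ball 0 (1/2)"
  have "Re (1 + w) \<noteq> Re 0" using norm_ln_one_plus_le(2)[of w] w by simp
  then have "1 + w \<noteq> 0" by force
  then show "perturbed_exp \<epsilon> (perturb_inv \<epsilon> 2 (ln (1 + w))) = w"
    using perturbed_exp_perturb_inv[OF sp, of "ln (1 + w)"] norm_ln_one_plus_le(1)[of w] w by simp
qed

lemma perturbed_exp_local_homeomorphism:
  assumes "0 \<le> \<epsilon>" "\<epsilon> \<le> 1/30"
  obtains W where "open W" "connected W" "0 \<in> W"
    "homeomorphic_map (top_of_set W) (top_of_set (ball 0 (1/2))) (perturbed_exp \<epsilon>)"
proof -
  define G where "G w = perturb_inv \<epsilon> 2 (ln (1 + w))" for w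
  have contG: "continuous_on (ball 0 (1/2)) G"
    and FG: "\<And>w. w \<in> ball 0 (1/2) \<Longrightarrow> perturbed_exp \<epsilon> (G w) = w"
    unfolding G_def using perturbed_exp_right_inverse[OF assms] by blast+
  have injG: "inj_on G (ball 0 (1/2))"
    by (rule inj_on_inverseI[where g = "perturbed_exp \<epsilon>"]) (rule FG)
  have "homeomorphic_maps (top_of_set (G ` ball 0 (1/2))) (top_of_set (ball 0 (1/2))) (perturbed_exp \<epsilon>) G"
    unfolding homeomorphic_maps_def
  proof (intro conjI)
    show "continuous_map (top_of_set (G ` ball 0 (1/2))) (top_of_set (ball 0 (1/2))) (perturbed_exp \<epsilon>)"
      using holomorphic_on_imp_continuous_on[OF holomorphic_perturbed_exp]
      by (intro continuous_map_into_subtopology) (auto simp: FG intro: continuous_on_subset)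
    show "continuous_map (top_of_set (ball 0 (1/2))) (top_of_set (G ` ball 0 (1/2))) G"
      using contG by (intro continuous_map_into_subtopology) auto
  qed (auto simp: FG)
  show ?thesis
  proof (rule that)
    show "open (G ` ball 0 (1/2))" by (rule invariance_of_domain[OF contG open_ball injG])
    show "connected (G ` ball 0 (1/2))" by (rule connected_continuous_image[OF contG connected_ball])
    have "G 0 = 0" using small_perturbation_2[OF assms] by (simp add: G_def perturb_inv_0)
    then show "0 \<in> G ` ball 0 (1/2)" by (intro image_eqI[of 0 G 0]) simp_all
    show "homeomorphic_map (top_of_set (G ` ball 0 (1/2))) (top_of_set (ball 0 (1/2))) (perturbed_exp \<epsilon>)"
      using \<open>homeomorphic_maps _ _ _ _\<close> homeomorphic_map_maps by blast
  qed
qed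

lemma standing_assumption_perturbed_exp:
  assumes "\<And>n. 0 \<le> es n" "\<And>n. es n \<le> 1/30"
  shows "standing_assumption (\<lambda>n. euclidean) (\<lambda>n. Some \<circ> perturbed_exp (es n)) (\<lambda>n. 0)"
proof -
  have "\<exists>W. open W \<and> connected W \<and> 0 \<in> W \<and>
      homeomorphic_map (top_of_set W) (top_of_set (ball 0 (1/2))) (perturbed_exp (es n))" for n
    using perturbed_exp_local_homeomorphism[OF assms] by metis
  then obtain W where W: "\<And>n. open (W n)" "\<And>n. connected (W n)" "\<And>n. 0 \<in> W n"
    "\<And>n. homeomorphic_map (top_of_set (W n)) (top_of_set (ball 0 (1/2))) (perturbed_exp (es n))"
    by metis
  define r :: real where "r = 2 * (1/2) / sqrt (1 + (1/2)\<^sup>2)"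
  have r: "0 < r" "sball (Some 0) r = Some ` ball 0 (1/2)"
    using sball_Some_0[of "1/2"] by (simp_all add: r_def add_pos_nonneg)

  show ?thesis
    unfolding standing_assumption_def
  proof (intro exI[of _ "Some 0"] exI[of _ r] exI[of _ W] conjI allI)
    fix n
    show "homeomorphic_map (top_of_set (W n)) (subtopology riemann_sphere (sball (Some 0) r))
        (Some \<circ> perturbed_exp (es n))"
      unfolding r(2) by (rule homeomorphic_map_compose[OF W(4) homeomorphic_map_Some])
  qed (use W r(1) in \<open>auto simp: connectedin_iff_connected\<close>)
qed

lemma discrete_subset_vimage:
  assumes "continuous_map X Y f" "inj_on f (topspace X)" "discrete_subset Y E"
  shows "discrete_subset X {x \<in> topspace X. f x \<in> E}"
  unfolding discrete_subset_def
proof (intro conjI ballI)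
  fix x assume "x \<in> topspace X"
  then obtain N where N: "openin Y N" "f x \<in> N" "finite (N \<inter> E)"
    using assms(1,3) unfolding discrete_subset_def continuous_map_def by blast
  have "{y \<in> topspace X. f y \<in> N} \<inter> {x \<in> topspace X. f x \<in> E} \<subseteq> {y \<in> topspace X. f y \<in> N \<inter> E}"
    by blast
  moreover have "finite {y \<in> topspace X. f y \<in> N \<inter> E}"
    using finite_vimage_IntI[OF N(3) assms(2)] by (simp add: vimage_def Int_def conj_commute)
  ultimately show "\<exists>U. openin X U \<and> x \<in> U \<and> finite (U \<inter> {x \<in> topspace X. f x \<in> E})"
    using openin_continuous_map_preimage[OF assms(1) N(1)] N(2) \<open>x \<in> topspace X\<close>
    by (intro exI[of _ "{y \<in> topspace X. f y \<in> N}"]) (auto intro: finite_subset)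
qed auto

lemma countable_discrete_subset_euclidean:
  fixes D :: "'a::euclidean_space set"
  assumes "discrete_subset euclidean D"
  shows "countable D"
proof -
  have "\<not> z islimpt D" for z
  proof -
    obtain N where "open N" "z \<in> N" "finite (N \<inter> D)"
      using assms unfolding discrete_subset_def by auto
    then show ?thesis by (auto simp: islimpt_eq_acc_point)
  qed
  then have "D sparse_in UNIV" by (simp add: sparse_in_open)
  then show ?thesis using sparse_imp_countable[OF open_UNIV] by simp
qed

definition disc_chart :: "'a topology \<Rightarrow> (complex \<Rightarrow> 'a) \<Rightarrow> complex \<Rightarrow> real \<Rightarrow> bool" where
  "disc_chart S k v \<delta> \<longleftrightarrow> 0 < \<delta> \<and> openin S (k ` ball v \<delta>) \<and>
     homeomorphic_map (top_of_set (ball v \<delta>)) (subtopology S (k ` ball v \<delta>)) k"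

lemma disc_chart_continuous: "disc_chart S k v \<delta> \<Longrightarrow> continuous_map (top_of_set (ball v \<delta>)) S k"
  unfolding disc_chart_def using homeomorphic_imp_continuous_map continuous_map_in_subtopology by blast

lemma disc_chart_inj: "disc_chart S k v \<delta> \<Longrightarrow> inj_on k (ball v \<delta>)"
  unfolding disc_chart_def using homeomorphic_imp_injective_map by fastforce

lemma disc_chart_openin:
  assumes "disc_chart S k v \<delta>" "open A" "A \<subseteq> ball v \<delta>"
  shows "openin S (k ` A)"
proof -
  have "openin (top_of_set (ball v \<delta>)) A" using assms(2,3) by (simp add: openin_open_eq)
  then have "openin (subtopology S (k ` ball v \<delta>)) (k ` A)"
    using assms(1) homeomorphic_imp_open_map unfolding disc_chart_def open_map_def by blast
  then show ?thesis using assms(1) openin_trans_full unfolding disc_chart_def by blast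
qed

lemma disc_chart_compactin:
  "disc_chart S k v \<delta> \<Longrightarrow> compact C \<Longrightarrow> C \<subseteq> ball v \<delta> \<Longrightarrow> compactin S (k ` C)"
  by (rule image_compactin[OF _ disc_chart_continuous])
    (auto simp: compactin_subtopology compactin_euclidean_iff)

lemma disc_chart_connectedin:
  "disc_chart S k v \<delta> \<Longrightarrow> connected C \<Longrightarrow> C \<subseteq> ball v \<delta> \<Longrightarrow> connectedin S (k ` C)"
  by (rule connectedin_continuous_map_image[OF disc_chart_continuous])
    (auto simp: connectedin_subtopology connectedin_iff_connected)

lemma disc_chart_inverse:
  assumes "disc_chart S k v \<delta>"
  shows "\<exists>h. continuous_map (subtopology S (k ` ball v \<delta>)) (top_of_set (ball v \<delta>)) h \<and>
    (\<forall>z \<in> k ` ball v \<delta>. h z \<in> ball v \<delta> \<and> k (h z) = z)"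
proof -
  obtain h where hk: "homeomorphic_maps (top_of_set (ball v \<delta>)) (subtopology S (k ` ball v \<delta>)) k h"
    using assms homeomorphic_map_maps unfolding disc_chart_def by blast
  have "k ` ball v \<delta> \<subseteq> topspace S"
    using assms openin_subset unfolding disc_chart_def by blast
  then have tS: "topspace (subtopology S (k ` ball v \<delta>)) = k ` ball v \<delta>" by (simp add: Int_absorb1)
  have h: "continuous_map (subtopology S (k ` ball v \<delta>)) (top_of_set (ball v \<delta>)) h"
    using hk by (simp add: homeomorphic_maps_def)
  have hB: "h z \<in> ball v \<delta>" if "z \<in> k ` ball v \<delta>" for z
    using continuous_map_image_subset_topspace[OF h] that
    unfolding tS topspace_euclidean_subtopology image_subset_iff by blast
  have kh: "k (h z) = z" if "z \<in> k ` ball v \<delta>" for z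
    using hk that unfolding homeomorphic_maps_def tS by blast
  show ?thesis by (intro exI[of _ h] conjI h ballI hB kh)

qed


lemma disc_chart_invariance_of_domain:
  fixes N :: "complex set"
  assumes c:
 "disc_chart S k v \<delta>" and "open N" and f: "continuous_map (top_of_set N) S f"
    and "inj_on f N" and fN: "f ` N \<subseteq> k ` ball v \<delta>"
  shows "openin S (f ` N)"
proof -
  obtain h where h: "continuous_map (subtopology S (k ` ball v \<delta>)) (top_of_set (ball v \<delta>)) h"
    and hk: "\<forall>z \<in> k ` ball v \<delta>. h z \<in> ball v \<delta> \<and> k (h z) = z"
    using disc_chart_inverse[OF c] by blast
  have hf: "h (f x) \<in> ball v \<delta>" "k (h (f x)) = f x" if "x \<in> N" for x
  proof -
    have "f x \<in> k ` ball v \<delta>" using fN that by blast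
    with hk have "h (f x) \<in> ball v \<delta> \<and> k (h (f x)) = f x" by (rule bspec)
    then show "h (f x) \<in> ball v \<delta>" "k (h (f x)) = f x" by simp_all
  qed

  have "continuous_map (top_of_set N) (subtopology S (k ` ball v \<delta>)) f"
    using fN by (intro continuous_map_into_subtopology f) auto
  then have "continuous_map (top_of_set N) (top_of_set (ball v \<delta>)) (h \<circ> f)"
    by (rule continuous_map_compose[OF _ h])
  then have cont: "continuous_on N (h \<circ> f)"
    by (simp add: continuous_map_in_subtopology)
  have inj: "inj_on (h \<circ> f) N"
  proof (rule inj_onI)
    fix a b assume ab: "a \<in> N" "b \<in> N" "(h \<circ> f) a = (h \<circ> f) b"
    then have "k (h (f a)) = k (h (f b))" by simp
    then have "f a = f b" by (simp only: hf(2)[OF ab(1)] hf(2)[OF ab(2)])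
    then show "a = b" using assms(4) ab(1,2) by (simp add: inj_on_eq_iff)
  qed
  have "open ((h \<circ> f) ` N)" by (rule invariance_of_domain[OF cont \<open>open N\<close> inj])
  moreover have "(h \<circ> f) ` N \<subseteq> ball v \<delta>"
    by (rule image_subsetI) (unfold comp_apply, rule hf(1))

  ultimately have "openin S (k ` ((h \<circ> f) ` N))" by (rule disc_chart_openin[OF c])
  moreover have "k ` ((h \<circ> f) ` N) = f ` N"
  proof -
    have "k ` ((h \<circ> f) ` N) = (\<lambda>x. k (h (f x))) ` N" by (simp add: image_comp)
    also have "\<dots> = f ` N" by (rule image_cong[OF refl hf(2)])
    finally show ?thesis .
  qed
  ultimately show ?thesis by (simp only:)
qed

lemma open_surface_disc_chart_within:
  assumes S: "open_surface S" and W: "openin S W" "x \<in> W"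
  obtains k v \<delta> where "disc_chart S k v \<delta>" "k v = x" "k ` ball v \<delta> \<subseteq> W"
proof -
  obtain U V where U: "openin S U" "x \<in> U" and V: "open (V::complex set)"
    and "subtopology S U homeomorphic_space top_of_set V"
    using S W openin_subset unfolding open_surface_def by blast
  then obtain h k where hk: "homeomorphic_maps (subtopology S U) (top_of_set V) h k"
    by (auto simp: homeomorphic_space_def)
  have k: "homeomorphic_map (top_of_set V) (subtopology S U) k"
    and h: "homeomorphic_map (subtopology S U) (top_of_set V) h"
    using hk homeomorphic_map_maps homeomorphic_maps_sym by blast+
  have tU: "topspace (subtopology S U) = U" using openin_subset[OF U(1)] by auto
  have hV: "h y \<in> V" "k (h y) = y" if "y \<in> U" for y
    using hk that tU unfolding homeomorphic_maps_def continuous_map_def by auto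
  have "openin (subtopology S U) (U \<inter> W)"
    using W(1) by (simp add: openin_subtopology_Int2)
  then have "openin (top_of_set V) (h ` (U \<inter> W))"
    using homeomorphic_imp_open_map[OF h] by (simp add: open_map_def)
  then have "open (h ` (U \<inter> W))" using V openin_open_trans by blast
  moreover have "h x \<in> h ` (U \<inter> W)" using U W by blast
  ultimately obtain \<delta> where \<delta>: "0 < \<delta>" "ball (h x) \<delta> \<subseteq> h ` (U \<inter> W)"
    using open_contains_ball by blast
  have ballV: "ball (h x) \<delta> \<subseteq> V" using \<delta>(2) hV by blast
  have kball: "k ` ball (h x) \<delta> \<subseteq> U \<inter> W" using \<delta>(2) hV by auto
  have "homeomorphic_map (subtopology (top_of_set V) (ball (h x) \<delta>))
      (subtopology (subtopology S U) (k ` ball (h x) \<delta>)) k"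
    by (rule homeomorphic_map_subtopologies[OF k]) (use ballV kball tU in auto)
  moreover have "openin (subtopology S U) (k ` ball (h x) \<delta>)"
    using homeomorphic_imp_open_map[OF k] ballV V by (auto simp: open_map_def openin_open_eq)
  ultimately have "disc_chart S k (h x) \<delta>"
    using \<delta>(1) kball U(1) openin_trans_full
    by (auto simp: disc_chart_def subtopology_subtopology Int_absorb1 Int_absorb2 ballV)
  then show ?thesis using that hV(2)[OF U(2)] kball by blast
qed

lemma open_surface_disc_chart_avoiding:
  assumes S: "open_surface S" and E: "discrete_subset S E" and x: "x \<in> topspace S"
  obtains k v \<delta> where "disc_chart S k v \<delta>" "k v = x" "E \<inter> k ` ball v \<delta> \<subseteq> {x}"
proof -
  obtain N where N: "openin S N" "x \<in> N" "finite (N \<inter> E)"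
    using E x unfolding discrete_subset_def by blast
  have "t1_space S" using S by (simp add: open_surface_def Hausdorff_imp_t1_space)
  moreover have "E \<subseteq> topspace S" using E by (simp add: discrete_subset_def)
  ultimately have "closedin S (N \<inter> E - {x})"
    using N(3) unfolding t1_space_closedin_finite by auto
  then have "openin S (N - (N \<inter> E - {x}))" by (rule openin_diff[OF N(1)])

  then obtain k v \<delta> where "disc_chart S k v \<delta>" "k v = x" "k ` ball v \<delta> \<subseteq> N - (N \<inter> E - {x})"
    using open_surface_disc_chart_within[OF S] N(2) by blast
  then show ?thesis using that by blast
qed

lemma connected_open_closure_dichotomy:
  fixes D :: "'a::topological_space set"
  assumes "connected U" "open D" "closure D \<inter> U \<subseteq> D"
  shows "U \<subseteq> D \<or> D \<inter> U = {}"
proof -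
  have "openin (top_of_set U) (D \<inter> U)"
    using assms(2) by (auto simp: openin_open)
  moreover have "closedin (top_of_set U) (D \<inter> U)"
    using assms(3) closure_subset[of D] by (auto simp: closedin_closed intro!: exI[of _ "closure D"])
  ultimately show ?thesis
    using assms(1) unfolding connected_clopen by blast
qed

lemma disc_chart_centre_in_closure:
  assumes "disc_chart S k v \<delta>" "0 < t" "t \<le> \<delta>"
  shows "k v \<in> S closure_of (k ` (ball v t - {v}))"
proof -
  have "v islimpt (ball v t - {v})"
    using assms(2) islimpt_ball[of v v t] islimpt_punctured by auto
  moreover have "ball v \<delta> \<inter> (ball v t - {v}) = ball v t - {v}"
    using assms(3) by auto
  ultimately have "v \<in> (top_of_set (ball v \<delta>)) closure_of (ball v t - {v})"
    using assms unfolding disc_chart_def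
    by (simp add: closure_of_subtopology euclidean_closure_of closure_def)
  then show ?thesis
    using continuous_map_image_closure_subset[OF disc_chart_continuous[OF assms(1)]] by blast
qed

locale plane_embedding =
  fixes S :: "'a topology" and \<iota> :: "complex \<Rightarrow> 'a"
  assumes surface: "open_surface S"
    and continuous: "continuous_map euclidean S \<iota>"
    and injective: "inj \<iota>"
begin

lemma Hausdorff: "Hausdorff_space S"
  using surface by (simp add: open_surface_def)

lemma range_subset: "range \<iota> \<subseteq> topspace S"
  using continuous by (auto simp: continuous_map_def)

lemma open_map: "open_map euclidean S \<iota>"
  unfolding open_map_def
proof clarify
  fix U :: "complex set" assume "openin euclidean U"
  show "openin S (\<iota> ` U)"
  proof (subst openin_subopen, intro ballI)
    fix y assume "y \<in> \<iota> ` U"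
    then obtain x where x: "x \<in> U" "y = \<iota> x" by blast
    have "\<iota> x \<in> topspace S" using range_subset by blast
    then obtain k v \<delta> where c: "disc_chart S k v \<delta>" "k v = \<iota> x"
      using open_surface_disc_chart_within[OF surface openin_topspace] by metis
    define N where "N = U \<inter> \<iota> -` (k ` ball v \<delta>)"
    have "openin euclidean {x \<in> topspace euclidean. \<iota> x \<in> k ` ball v \<delta>}"
      using c(1) unfolding disc_chart_def by (intro openin_continuous_map_preimage[OF continuous]) auto
    then have "open N" using \<open>openin euclidean U\<close> by (auto simp: N_def vimage_def)
    moreover have "continuous_map (top_of_set N) S \<iota>"
      by (rule continuous_map_from_subtopology[OF continuous])
    ultimately have "openin S (\<iota> ` N)"
      using injective by (intro disc_chart_invariance_of_domain[OF c(1)]) (auto simp: N_def inj_on_def)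
    moreover have "x \<in> N"
    proof -
      have "0 < \<delta>" using c(1) by (simp add: disc_chart_def)
      then have "\<iota> x \<in> k ` ball v \<delta>" unfolding c(2)[symmetric] by simp
      then show ?thesis using x(1) by (simp add: N_def)
    qed
    then have "y \<in> \<iota> ` N" using x(2) by blast
    moreover have "\<iota> ` N \<subseteq> \<iota> ` U" unfolding N_def by blast
    ultimately show "\<exists>T. openin S T \<and> y \<in> T \<and> T \<subseteq> \<iota> ` U" by blast

  qed
qed

lemma openin_range: "openin S (range \<iota>)"
  using open_map by (simp add: open_map_def)

lemma homeomorphic_map_onto_range: "homeomorphic_map euclidean (subtopology S (range \<iota>)) \<iota>"
  by (rule bijective_open_imp_homeomorphic_map)
    (use continuous open_map injective range_subset in
      \<open>auto intro: continuous_map_into_subtopology open_map_into_subtopology\<close>)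

lemma countable_vimage_discrete:
  assumes "discrete_subset S E"
  shows "countable (\<iota> -` E)"
proof -
  have "discrete_subset euclidean {x \<in> topspace euclidean. \<iota> x \<in> E}"
    using injective by (intro discrete_subset_vimage[OF continuous _ assms]) (simp add: inj_on_def)
  then show ?thesis by (simp add: vimage_def countable_discrete_subset_euclidean)
qed

lemma exp_lift_locally_inverse:
  assumes f\<iota>: "\<And>z. f (\<iota> z) = Some (exp z - 1)"
    and \<theta>: "continuous_map (subtopology S K) euclidean \<theta>"
      "\<And>x. x \<in> K \<Longrightarrow> f x = Some (exp (\<theta> x) - 1)"
    and y: "y \<in> K" "\<iota> (\<theta> y) = y"
  shows "\<exists>N. openin (subtopology S K) N \<and> y \<in> N \<and> (\<forall>z \<in> N. \<iota> (\<theta> z) = z)"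
proof -
  \<comment> \<open>\<open>exp\<close> is injective on discs of radius \<open>pi\<close>\<close>
  define B where "B = ball (\<theta> y) pi"
  define N where "N = {z \<in> topspace (subtopology S K). \<theta> z \<in> B} \<inter> (\<iota> ` B \<inter> K)"
  have "openin (subtopology S K) {z \<in> topspace (subtopology S K). \<theta> z \<in> B}"
    by (rule openin_continuous_map_preimage[OF \<theta>(1)]) (simp add: B_def)
  moreover have "openin (subtopology S K) (\<iota> ` B \<inter> K)"
    using open_map unfolding open_map_def B_def by (auto intro: openin_subtopology_Int)
  ultimately have "openin (subtopology S K) N" unfolding N_def by (rule openin_Int)
  moreover have "y \<in> N"
  proof -
    have "\<theta> y \<in> B" by (simp add: B_def)
    then have "y \<in> \<iota> ` B" using image_eqI[of y \<iota> "\<theta> y" B] y(2) by simp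
    moreover have "\<iota> (\<theta> y) \<in> topspace S" using range_subset by blast
    ultimately show ?thesis using y \<open>\<theta> y \<in> B\<close> by (simp add: N_def)
  qed

  moreover have "\<iota> (\<theta> z) = z" if zN: "z \<in> N" for z
  proof -
    obtain b where b: "b \<in> B" "z = \<iota> b" and z: "z \<in> K" "\<theta> z \<in> B"
      using zN unfolding N_def by blast

    have "exp b = exp (\<theta> z)" using f\<iota>[of b] \<theta>(2)[OF z(1)] b(2) by simp
    then have "b = \<theta> z" using inj_on_exp_pi[of "\<theta> y"] b(1) z(2) by (auto simp: B_def inj_on_def)
    then show ?thesis using b(2) by simp
  qed
  ultimately show ?thesis by blast
qed

lemma exp_lift_inverse:
  assumes f\<iota>: "\<And>z. f (\<iota> z) = Some (exp z - 1)"
    and K: "connectedin S K" "\<iota> 0 \<in> K"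
    and \<theta>: "continuous_map (subtopology S K) euclidean \<theta>" "\<theta> (\<iota> 0) = 0"
      "\<And>x. x \<in> K \<Longrightarrow> f x = Some (exp (\<theta> x) - 1)"
    and "x \<in> K"
  shows "\<iota> (\<theta> x) = x"
proof -
  define X where "X = subtopology S K"
  have tX: "topspace X = K"
    using connectedin_subset_topspace[OF K(1)] by (simp add: X_def Int_absorb1)
  define A where "A = {x \<in> topspace X. (\<iota> \<circ> \<theta>) x = id x}"
  have "closedin X A"
    unfolding A_def X_def using Hausdorff
    by (rule closedin_continuous_maps_eq[OF _ continuous_map_compose[OF \<theta>(1) continuous]])
      (simp add: continuous_map_from_subtopology)
  moreover have "openin X A"
  proof (subst openin_subopen, intro ballI)
    fix y assume "y \<in> A"
    then have "y \<in> K" "\<iota> (\<theta> y) = y" by (auto simp: A_def tX)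
    then obtain N where "openin X N" "y \<in> N" "\<forall>z \<in> N. \<iota> (\<theta> z) = z"
      unfolding X_def using exp_lift_locally_inverse[OF f\<iota> \<theta>(1,3)] by blast
    moreover have "N \<subseteq> topspace X" using \<open>openin X N\<close> by (rule openin_subset)
    ultimately show "\<exists>T. openin X T \<and> y \<in> T \<and> T \<subseteq> A" by (auto simp: A_def)
  qed
  moreover have "\<iota> 0 \<in> A" using K(2) \<theta>(2) by (simp add: A_def tX)
  moreover have "connected_space X" using K(1) by (simp add: X_def connectedin_def)
  ultimately have "A = topspace X" using connected_space_clopen_in by blast
  then show ?thesis using \<open>x \<in> K\<close> by (auto simp: A_def tX)
qed

lemma compact_vimage:
  assumes "compactin S C" "C \<subseteq> range \<iota>"
  shows "compact (\<iota> -` C)"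
proof -
  have "compactin (subtopology S (range \<iota>)) (\<iota> ` (\<iota> -` C))"
    using assms by (simp add: compactin_subtopology image_vimage_eq Int_absorb2)
  then show ?thesis
    using homeomorphic_map_compactness_eq[OF homeomorphic_map_onto_range]
    by (simp add: compactin_euclidean_iff)
qed

lemma closure_vimage_punctured_disc:
  assumes c: "disc_chart S k v \<delta>" and q: "k v \<notin> range \<iota>" and "t < \<delta>"
    and x: "x \<in> closure (\<iota> -` k ` (ball v t - {v}))"
  shows "\<iota> x \<in> k ` (ball v t - {v}) \<union> k ` sphere v t"
proof -
  have "cball v t \<subseteq> ball v \<delta>" using \<open>t < \<delta>\<close> by auto
  then have "closedin S (k ` cball v t)"
    by (intro compactin_imp_closedin[OF Hausdorff] disc_chart_compactin[OF c]) auto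
  then have cl: "S closure_of (k ` (ball v t - {v})) \<subseteq> k ` cball v t"
    by (intro closure_of_minimal) auto
  have "\<iota> x \<in> S closure_of (\<iota> ` (\<iota> -` k ` (ball v t - {v})))"
    using continuous_map_image_closure_subset[OF continuous, of "\<iota> -` k ` (ball v t - {v})"] x
    unfolding euclidean_closure_of by blast
  moreover have "\<iota> ` (\<iota> -` k ` (ball v t - {v})) \<subseteq> k ` (ball v t - {v})" by auto
  ultimately have "\<iota> x \<in> k ` cball v t" using cl closure_of_mono by blast
  then obtain s where s: "s \<in> cball v t" "\<iota> x = k s" by blast
  have "k s \<in> range \<iota>" unfolding s(2)[symmetric] by (rule rangeI)
  then have "s \<noteq> v" using q by (cases "s = v") simp_all
  then have "s \<in> ball v t - {v} \<or> s \<in> sphere v t" using s(1) by auto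
  then show ?thesis using s(2) by blast
qed

lemma unbounded_vimage_punctured_disc:
  assumes c: "disc_chart S k v \<delta>" and q: "k v \<notin> range \<iota>" and t: "0 < t" "t \<le> \<delta>"
    and punct: "k ` (ball v t - {v}) \<subseteq> range \<iota>"
  shows "\<not> bounded (\<iota> -` k ` (ball v t - {v}))"
proof
  assume "bounded (\<iota> -` k ` (ball v t - {v}))"
  then obtain R where "\<forall>x \<in> \<iota> -` k ` (ball v t - {v}). norm x \<le> R"
    unfolding bounded_iff by blast
  then have R: "\<iota> -` k ` (ball v t - {v}) \<subseteq> cball 0 R"
    by (intro subsetI) (simp only: mem_cball_0)
  have "k ` (ball v t - {v}) = \<iota> ` (\<iota> -` k ` (ball v t - {v}))"
    using punct by (simp add: image_vimage_eq Int_absorb2)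
  also have "\<dots> \<subseteq> \<iota> ` cball 0 R" using R by (rule image_mono)
  finally have "k ` (ball v t - {v}) \<subseteq> \<iota> ` cball 0 R" .
  moreover have "closedin S (\<iota> ` cball 0 R)"
    by (intro compactin_imp_closedin[OF Hausdorff] image_compactin[OF _ continuous])
      (simp add: compactin_euclidean_iff)
  ultimately have "S closure_of (k ` (ball v t - {v})) \<subseteq> \<iota> ` cball 0 R"
    by (rule closure_of_minimal)
  then have "k v \<in> \<iota> ` cball 0 R" using disc_chart_centre_in_closure[OF c t] by (rule subsetD)
  then show False using q by (simp add: image_iff)
qed

lemma exterior_in_vimage_punctured_disc:
  assumes c: "disc_chart S k v \<delta>" and q: "k v \<notin> range \<iota>" and t: "0 < t" "t < \<delta>"
    and punct: "k ` (ball v \<delta> - {v}) \<subseteq> range \<iota>"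
  obtains R where "- cball 0 R \<subseteq> \<iota> -` k ` (ball v t - {v})"
proof -
  have sub: "ball v t - {v} \<subseteq> ball v \<delta> - {v}" "sphere v t \<subseteq> ball v \<delta> - {v}"
    using t by auto
  define D where "D = \<iota> -` k ` (ball v t - {v})"
  have "openin S (k ` (ball v t - {v}))"
    using sub(1) by (intro disc_chart_openin[OF c]) auto
  from openin_continuous_map_preimage[OF continuous this]
  have "open D" by (simp add: D_def vimage_def)
  have "compactin S (k ` sphere v t)"
    by (rule disc_chart_compactin[OF c compact_sphere]) (use sub(2) in blast)
  then have "bounded (\<iota> -` k ` sphere v t)"
    by (intro compact_imp_bounded compact_vimage order_trans[OF image_mono[OF sub(2)] punct])
  then obtain R where "\<forall>x \<in> \<iota> -` k ` sphere v t. norm x \<le> R"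
    unfolding bounded_iff by blast
  then have R: "\<iota> -` k ` sphere v t \<subseteq> cball 0 R"
    by (intro subsetI) (simp only: mem_cball_0)
  \<comment> \<open>the circle around the puncture separates \<open>D\<close> from the rest of the plane\<close>
  have "closure D \<inter> - cball 0 R \<subseteq> D"
  proof
    fix x assume x: "x \<in> closure D \<inter> - cball 0 R"
    then have "\<iota> x \<in> k ` (ball v t - {v}) \<union> k ` sphere v t"
      using closure_vimage_punctured_disc[OF c q t(2)] by (simp add: D_def)
    moreover have "\<iota> x \<notin> k ` sphere v t" using x R by blast
    ultimately show "x \<in> D" by (simp add: D_def)
  qed
  then have "- cball 0 R \<subseteq> D \<or> D \<inter> - cball 0 R = {}"
    using \<open>open D\<close> by (intro connected_open_closure_dichotomy connected_complement_bounded_convex) auto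
  moreover have "\<not> bounded D"
    unfolding D_def using order_trans[OF image_mono[OF sub(1)] punct]
    by (rule unbounded_vimage_punctured_disc[OF c q t(1) less_imp_le[OF t(2)]])
  then have "\<not> D \<subseteq> cball 0 R" using bounded_subset[OF bounded_cball] by blast
  ultimately show ?thesis using that unfolding D_def by blast
qed

lemma compactin_insert_range:
  assumes c: "disc_chart S k v \<delta>" and q: "k v \<notin> range \<iota>"
    and punct: "k ` (ball v \<delta> - {v}) \<subseteq> range \<iota>"
  shows "compactin S (insert (k v) (range \<iota>))"
proof -
  define t where "t = \<delta> / 2"
  have t: "0 < t" "t < \<delta>" using c by (auto simp: disc_chart_def t_def)
  obtain R where far: "- cball 0 R \<subseteq> \<iota> -` k ` (ball v t - {v})"
    using exterior_in_vimage_punctured_disc[OF c q t punct] .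
  have "range \<iota> \<subseteq> \<iota> ` cball 0 R \<union> k ` cball v t"
  proof
    fix y assume "y \<in> range \<iota>"
    then obtain x where x: "y = \<iota> x" by blast
    show "y \<in> \<iota> ` cball 0 R \<union> k ` cball v t"
    proof (cases "x \<in> cball 0 R")
      case False
      then have "\<iota> x \<in> k ` (ball v t - {v})" using far by blast
      moreover have "k ` (ball v t - {v}) \<subseteq> k ` cball v t" by (rule image_mono) auto
      ultimately show ?thesis using x by blast
    qed (use x in blast)
  qed
  moreover have "cball v t \<subseteq> insert v (ball v \<delta> - {v})" using t by auto
  then have "k ` cball v t \<subseteq> insert (k v) (range \<iota>)"
    using image_mono[of _ _ k] punct by fastforce
  moreover have "k v \<in> k ` cball v t" using t(1) by simp
  ultimately have "insert (k v) (range \<iota>) = \<iota> ` cball 0 R \<union> k ` cball v t" by blast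
  moreover have "compactin S (\<iota> ` cball 0 R)"
    by (intro image_compactin[OF _ continuous]) (simp add: compactin_euclidean_iff)
  moreover have "compactin S (k ` cball v t)"
    using t(2) by (intro disc_chart_compactin[OF c]) auto
  ultimately show ?thesis by (simp add: compactin_Un)
qed

lemma compact_connected_to_chart_centre:
  assumes E: "discrete_subset S E" "\<iota> 0 \<notin> E"
    and c: "disc_chart S k v \<delta>" "E \<inter> k ` ball v \<delta> = {}"
    and u: "u \<in> ball v \<delta>" "k u \<in> range \<iota>"
  obtains K where "compactin S K" "connectedin S K" "K \<subseteq> topspace S - E" "\<iota> 0 \<in> K" "k v \<in> K"
proof -
  obtain z where z: "k u = \<iota> z" using u(2) by blast
  have "path_connected (- (\<iota> -` E))"
    by (intro path_connected_complement_countable countable_vimage_discrete[OF E(1)]) simp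
  moreover have "0 \<in> - (\<iota> -` E)" using E(2) by simp
  moreover have "z \<in> - (\<iota> -` E)"
  proof
    assume "z \<in> \<iota> -` E"
    then have "\<iota> z \<in> E" by simp
    moreover have "\<iota> z \<in> k ` ball v \<delta>" unfolding z[symmetric] using u(1) by (rule imageI)
    ultimately show False using c(2) by blast
  qed
  ultimately obtain g where g: "path g" "path_image g \<subseteq> - (\<iota> -` E)" "pathstart g = 0" "pathfinish g = z"
    unfolding path_connected_def by blast
  have seg: "closed_segment u v \<subseteq> ball v \<delta>"
    using u(1) c(1) by (intro closed_segment_subset) (auto simp: disc_chart_def)
  have "z \<in> path_image g" using g(4) pathfinish_in_path_image[of g] by simp
  then have "k u \<in> \<iota> ` path_image g" unfolding z by (rule imageI)
  moreover have "k u \<in> k ` closed_segment u v" by simp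
  ultimately have meet: "\<iota> ` path_image g \<inter> k ` closed_segment u v \<noteq> {}" by blast
  have "connectedin S (\<iota> ` path_image g)"
    by (rule connectedin_continuous_map_image[OF continuous])
      (simp add: connectedin_iff_connected connected_path_image g(1))
  moreover have "connectedin S (k ` closed_segment u v)"
    by (rule disc_chart_connectedin[OF c(1) connected_segment seg])
  ultimately have conn: "connectedin S (\<iota> ` path_image g \<union> k ` closed_segment u v)"
    using meet by (rule connectedin_Un)
  have "compactin S (\<iota> ` path_image g)"
    by (rule image_compactin[OF _ continuous]) (simp add: compactin_euclidean_iff compact_path_image g(1))
  moreover have "compactin S (k ` closed_segment u v)"
    by (rule disc_chart_compactin[OF c(1) compact_segment seg])
  ultimately have comp: "compactin S (\<iota> ` path_image g \<union> k ` closed_segment u v)"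
    by (simp add: compactin_Un)
  have "\<iota> ` path_image g \<subseteq> topspace S - E" using g(2) range_subset by blast
  moreover have "k ` closed_segment u v \<subseteq> topspace S - E"
  proof -
    have "k ` ball v \<delta> \<subseteq> topspace S" using c(1) unfolding disc_chart_def by (blast dest: openin_subset)
    then show ?thesis using image_mono[OF seg, of k] c(2) by blast
  qed
  moreover have "\<iota> 0 \<in> \<iota> ` path_image g"
  proof (rule imageI)
    show "0 \<in> path_image g" using g(3) pathstart_in_path_image[of g] by simp
  qed

  moreover have "k v \<in> k ` closed_segment u v" by simp
  ultimately show ?thesis using that[OF comp conn] by blast
qed

end

locale absorbing_plane_embedding = plane_embedding +
  fixes E :: "'a set"
  assumes discrete: "discrete_subset S E" and base: "\<iota> 0 \<notin> E"
    and absorbs: "\<And>K. compactin S K \<Longrightarrow> connectedin S K \<Longrightarrow> K \<subseteq> topspace S - E \<Longrightarrow>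
      \<iota> 0 \<in> K \<Longrightarrow> K \<subseteq> range \<iota>"
begin

lemma closure_point_in_range:
  assumes q: "q \<in> S closure_of range \<iota>" "q \<notin> E"
  shows "q \<in> range \<iota>"
proof -
  have "q \<in> topspace S" using q(1) by (simp add: in_closure_of)
  then obtain k v \<delta> where c: "disc_chart S k v \<delta>" "k v = q" and cE: "E \<inter> k ` ball v \<delta> \<subseteq> {q}"
    by (rule open_surface_disc_chart_avoiding[OF surface discrete])
  have PE: "E \<inter> k ` ball v \<delta> = {}" using cE q(2) by blast
  have P: "openin S (k ` ball v \<delta>)" "0 < \<delta>" using c(1) by (simp_all add: disc_chart_def)
  then have "q \<in> k ` ball v \<delta>" unfolding c(2)[symmetric] by simp
  then obtain y where y: "y \<in> range \<iota>" "y \<in> k ` ball v \<delta>"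
    using q(1) P(1) unfolding in_closure_of by blast
  from y(2) obtain u where u: "u \<in> ball v \<delta>" "y = k u" by blast
  have "k u \<in> range \<iota>" using y(1) u(2) by simp
  then obtain K where "compactin S K" "connectedin S K" "K \<subseteq> topspace S - E" "\<iota> 0 \<in> K" "k v \<in> K"
    by (rule compact_connected_to_chart_centre[OF discrete base c(1) PE u(1)])
  then have "K \<subseteq> range \<iota>" "k v \<in> K" by (simp_all add: absorbs)
  then show ?thesis unfolding c(2) by blast

qed

lemma punctured_disc_in_range:
  assumes q: "k v \<in> S closure_of range \<iota>" "k v \<notin> range \<iota>"
    and c: "disc_chart S k v \<delta>" and cE: "E \<inter> k ` ball v \<delta> \<subseteq> {k v}"
  shows "k ` (ball v \<delta> - {v}) \<subseteq> range \<iota>"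
proof -
  define P where "P = k ` (ball v \<delta> - {v})"
  have "openin S P" unfolding P_def by (rule disc_chart_openin[OF c]) auto
  then have tX: "topspace (subtopology S P) = P" using openin_subset by (auto simp: Int_absorb1)
  have "E \<inter> P = {}"
  proof -
    have "k u \<notin> E" if "u \<in> ball v \<delta> - {v}" for u
    proof
      assume "k u \<in> E"
      then have "k u = k v" using cE that by blast
      then show False using that disc_chart_inj[OF c] c by (auto simp: inj_on_def disc_chart_def)
    qed
    then have "x \<notin> E" if "x \<in> P" for x
      using that unfolding P_def by blast
    then show ?thesis by blast
  qed

  have "openin (subtopology S P) (range \<iota> \<inter> P)"
    by (rule openin_subtopology_Int[OF openin_range])
  moreover have "closedin (subtopology S P) (range \<iota> \<inter> P)"
  proof -
    have "range \<iota> \<inter> P = S closure_of range \<iota> \<inter> P"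
      using closure_of_subset[OF range_subset] closure_point_in_range \<open>E \<inter> P = {}\<close> by blast
    then show ?thesis
      unfolding closedin_subtopology by (intro exI[of _ "S closure_of range \<iota>"]) simp

  qed
  moreover have "range \<iota> \<inter> P \<noteq> {}"
  proof -
    have "openin S (k ` ball v \<delta>)" "k v \<in> k ` ball v \<delta>" using c by (auto simp: disc_chart_def)
    then obtain y where y: "y \<in> range \<iota>" "y \<in> k ` ball v \<delta>"
      using q(1) unfolding in_closure_of by blast
    then obtain u where u: "u \<in> ball v \<delta>" "y = k u" by blast
    have "u \<noteq> v" using q(2) y(1) u(2) by auto
    then have "y \<in> P" unfolding P_def u(2) using u(1) by blast
    then show ?thesis using y(1) by blast

  qed
  moreover have "connected_space (subtopology S P)"
    using disc_chart_connectedin[OF c connected_punctured_ball] unfolding P_def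
    by (simp add: connectedin_def)
  ultimately have "range \<iota> \<inter> P = P"
    using connected_space_clopen_in tX by metis
  then show ?thesis unfolding P_def by blast

qed

lemma closure_of_range_subset: "S closure_of range \<iota> \<subseteq> range \<iota>"
proof
  fix q assume q: "q \<in> S closure_of range \<iota>"
  show "q \<in> range \<iota>"
  proof (rule ccontr)
    assume nq: "q \<notin> range \<iota>"
    have "q \<in> topspace S" using q by (simp add: in_closure_of)
    then obtain k v \<delta> where c: "disc_chart S k v \<delta>" "k v = q" and cE: "E \<inter> k ` ball v \<delta> \<subseteq> {q}"
      by (rule open_surface_disc_chart_avoiding[OF surface discrete])
    have punct: "k ` (ball v \<delta> - {v}) \<subseteq> range \<iota>"
      using punctured_disc_in_range[OF _ _ c(1)] q nq cE unfolding c(2) by blast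
    have "closedin S (insert q (range \<iota>))"
      using compactin_imp_closedin[OF Hausdorff compactin_insert_range[OF c(1) _ punct]] nq
      unfolding c(2) by blast
    moreover have "insert q (range \<iota>) = range \<iota> \<union> k ` ball v \<delta>"
    proof -
      have "ball v \<delta> \<subseteq> insert v (ball v \<delta> - {v})" by blast
      then have "k ` ball v \<delta> \<subseteq> insert q (range \<iota>)"
        using image_mono[of _ _ k] punct c(2) by fastforce
      moreover have "q \<in> k ` ball v \<delta>" using c by (auto simp: disc_chart_def)
      ultimately show ?thesis by blast
    qed
    then have "openin S (insert q (range \<iota>))"
      using openin_range c(1) by (auto simp: disc_chart_def)
    moreover have "connected_space S" using surface by (simp add: open_surface_def)
    ultimately have "insert q (range \<iota>) = topspace S"
      using connected_space_clopen_in by blast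
    then have "compact_space S"
      using compactin_insert_range[OF c(1) _ punct] nq unfolding c(2) compact_space_def by simp
    then show False using surface by (simp add: open_surface_def)
  qed
qed

lemma range_eq_topspace: "range \<iota> = topspace S"
proof -
  have "closedin S (range \<iota>)"
    using closure_of_range_subset range_subset closure_of_subset_eq by blast
  moreover have "connected_space S" using surface by (simp add: open_surface_def)
  ultimately show ?thesis
    using openin_range connected_space_clopen_in by blast
qed

lemma homeomorphic_map: "homeomorphic_map euclidean S \<iota>"
  using homeomorphic_map_onto_range by (simp add: range_eq_topspace)

end

lemma (in plane_embedding) absorbing_if_kernel:
  assumes kc: "kernel_cond (\<lambda>n. euclidean) (\<lambda>n. Some \<circ> perturbed_exp (es n)) (\<lambda>n. 0) S f (\<iota> 0)"
    and f: "\<And>z. f (\<iota> z) = Some (exp z - 1)"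
  obtains E where "absorbing_plane_embedding S \<iota> E"
proof -
  from kc obtain E where E: "discrete_subset S E" "\<iota> 0 \<notin> E"
    and L: "\<forall>K. compactin S K \<and> K \<subseteq> topspace S - E \<and> \<iota> 0 \<in> K \<longrightarrow>
      (\<exists>N. \<forall>n>N. \<exists>\<phi>. continuous_map (subtopology S K) euclidean \<phi> \<and> inj_on \<phi> K \<and> \<phi> (\<iota> 0) = 0 \<and>
        (\<forall>x\<in>K. (Some \<circ> perturbed_exp (es n)) (\<phi> x) = f x))"
    unfolding kernel_cond_def by (elim conjE exE) (rule that)
  have "K \<subseteq> range \<iota>"
    if K: "compactin S K" "connectedin S K" "K \<subseteq> topspace S - E" "\<iota> 0 \<in> K" for K
  proof -
    obtain N where "\<forall>n>N. \<exists>\<phi>. continuous_map (subtopology S K) euclidean \<phi> \<and> inj_on \<phi> K \<and>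
        \<phi> (\<iota> 0) = 0 \<and> (\<forall>x\<in>K. (Some \<circ> perturbed_exp (es n)) (\<phi> x) = f x)"
      using L K(1,3,4) by blast
    then obtain \<phi> where \<phi>: "continuous_map (subtopology S K) euclidean \<phi>" "\<phi> (\<iota> 0) = 0"
      "\<forall>x\<in>K. (Some \<circ> perturbed_exp (es (Suc N))) (\<phi> x) = f x"
      using lessI[of N] by blast
    \<comment> \<open>\<open>perturb \<circ> \<phi>\<close> is a continuous logarithm of \<open>f + 1\<close> along \<open>K\<close>\<close>
    define \<theta> where "\<theta> = perturb (es (Suc N)) \<circ> \<phi>"
    have "continuous_map euclidean euclidean (perturb (es (Suc N)))"
      unfolding perturb_def[abs_def] by (simp add: continuous_intros)
    then have "continuous_map (subtopology S K) euclidean \<theta>"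
      unfolding \<theta>_def by (rule continuous_map_compose[OF \<phi>(1)])
    moreover have "\<theta> (\<iota> 0) = 0" by (simp add: \<theta>_def \<phi>(2))
    moreover have "f x = Some (exp (\<theta> x) - 1)" if "x \<in> K" for x
      using \<phi>(3) that by (simp add: \<theta>_def perturbed_exp_def)
    ultimately have "\<iota> (\<theta> x) = x" if "x \<in> K" for x
      by (rule exp_lift_inverse[OF f K(2,4)]) (use that in auto)
    then show "K \<subseteq> range \<iota>" by (metis range_eqI subsetI)
  qed
  then have "absorbing_plane_embedding S \<iota> E"
    using E by (intro absorbing_plane_embedding.intro absorbing_plane_embedding_axioms.intro
      plane_embedding_axioms) auto
  then show ?thesis by (rule that)
qed

lemma is_kernel_perturbed_exp:
  assumes "es \<longlonglongrightarrow> 0" "\<And>n. 0 \<le> es n"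
  shows "is_kernel (\<lambda>n. euclidean) (\<lambda>n. Some \<circ> perturbed_exp (es n)) (\<lambda>n. 0)
           euclidean (Some \<circ> (\<lambda>z. exp z - 1)) 0"
  unfolding is_kernel_def
proof (intro conjI allI impI)
  show "kernel_cond (\<lambda>n. euclidean) (\<lambda>n. Some \<circ> perturbed_exp (es n)) (\<lambda>n. 0)
      euclidean (Some \<circ> (\<lambda>z. exp z - 1)) 0"
    by (rule kernel_cond_perturbed_exp[OF assms])
  fix S :: "complex topology" and f w
  assume "kernel_cond (\<lambda>n. euclidean) (\<lambda>n. Some \<circ> perturbed_exp (es n)) (\<lambda>n. 0) S f w \<and>
    psub euclidean (Some \<circ> (\<lambda>z. exp z - 1)) 0 S f w"
  then have kc: "kernel_cond (\<lambda>n. euclidean) (\<lambda>n. Some \<circ> perturbed_exp (es n)) (\<lambda>n. 0) S f w"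
    and "psub euclidean (Some \<circ> (\<lambda>z. exp z - 1)) 0 S f w" by auto
  then obtain \<iota> where \<iota>: "continuous_map euclidean S \<iota>" "inj \<iota>" "\<iota> 0 = w"
    "\<And>z. f (\<iota> z) = Some (exp z - 1)"
    unfolding psub_def by auto
  have "open_surface S"
    using kc by (simp add: kernel_cond_def pointed_surface_def spread_surface_def)
  then interpret plane_embedding S \<iota> using \<iota>(1,2) by unfold_locales
  obtain E where "absorbing_plane_embedding S \<iota> E"
    by (rule absorbing_if_kernel[OF kc[folded \<iota>(3)] \<iota>(4)])
  then have "homeomorphic_map euclidean S \<iota>"
    by (rule absorbing_plane_embedding.homeomorphic_map)
  then show "pequiv euclidean (Some \<circ> (\<lambda>z. exp z - 1)) 0 S f w"
    unfolding pequiv_def using \<iota>(3,4) by (intro exI[of _ \<iota>]) auto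
qed

lemma caratheodory_converges_perturbed_exp:
  assumes "es \<longlonglongrightarrow> 0" "\<And>n. 0 \<le> es n" "\<And>n. es n \<le> 1/30"
  shows "caratheodory_converges (\<lambda>n. euclidean) (\<lambda>n. Some \<circ> perturbed_exp (es n)) (\<lambda>n. 0)
           euclidean (Some \<circ> (\<lambda>z. exp z - 1)) 0"
  unfolding caratheodory_converges_def
proof (intro conjI allI impI)
  show "standing_assumption (\<lambda>n. euclidean) (\<lambda>n. Some \<circ> perturbed_exp (es n)) (\<lambda>n. 0)"
    using assms(2,3) by (rule standing_assumption_perturbed_exp)
  fix r :: "nat \<Rightarrow> nat" assume "strict_mono r"
  then have lim: "(es \<circ> r) \<longlonglongrightarrow> 0" using assms(1) by (rule LIMSEQ_subseq_LIMSEQ[rotated])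
  have "is_kernel (\<lambda>n. euclidean) (\<lambda>n. Some \<circ> perturbed_exp ((es \<circ> r) n)) (\<lambda>n. 0)
      euclidean (Some \<circ> (\<lambda>z. exp z - 1)) 0"
    by (rule is_kernel_perturbed_exp[OF lim]) (simp add: assms(2))

  moreover have "(\<lambda>n. Some \<circ> perturbed_exp (es n)) \<circ> r = (\<lambda>n. Some \<circ> perturbed_exp ((es \<circ> r) n))"
    "(\<lambda>n. euclidean :: complex topology) \<circ> r = (\<lambda>n. euclidean)" "(\<lambda>n. 0::complex) \<circ> r = (\<lambda>n. 0)"

    by (rule ext, simp)+
  ultimately show "is_kernel ((\<lambda>n. euclidean) \<circ> r) ((\<lambda>n. Some \<circ> perturbed_exp (es n)) \<circ> r)
      ((\<lambda>n. 0) \<circ> r) euclidean (Some \<circ> (\<lambda>z. exp z - 1)) 0"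
    by (simp only:)
qed

theorem theorem5p1:
  shows "\<exists>(F :: nat \<Rightarrow> complex \<Rightarrow> complex) (f :: complex \<Rightarrow> complex).
     (\<forall>n. normalized_entire_triple (F n) \<and> entire_order (F n) = \<infinity>) \<and>
     normalized_entire_triple f \<and> entire_order f = 1 \<and>
     caratheodory_converges (\<lambda>n. euclidean :: complex topology) (\<lambda>n. Some \<circ> F n) (\<lambda>n. 0)
        (euclidean :: complex topology) (Some \<circ> f) 0"
proof (intro exI conjI allI)
  define es :: "nat \<Rightarrow> real" where "es n = 1 / (real n + 30)" for n
  have es: "0 < es n" "es n \<le> 1/30" for n by (simp_all add: es_def field_simps)
  have "es \<longlonglongrightarrow> 0" unfolding es_def by real_asymp
  then show "caratheodory_converges (\<lambda>n. euclidean) (\<lambda>n. Some \<circ> perturbed_exp (es n)) (\<lambda>n. 0)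
      euclidean (Some \<circ> (\<lambda>z. exp z - 1)) 0"
    using es by (intro caratheodory_converges_perturbed_exp) (auto intro: less_imp_le)
  show "normalized_entire_triple (perturbed_exp (es n))" for n
    by (rule normalized_perturbed_exp)
  show "entire_order (perturbed_exp (es n)) = \<infinity>" for n
    by (rule entire_order_perturbed_exp[OF es(1)])
  show "normalized_entire_triple (\<lambda>z. exp z - 1)"
    using normalized_perturbed_exp[of 0] by (simp add: perturbed_exp_0)
  show "entire_order (\<lambda>z. exp z - 1) = 1"
    by (rule entire_order_exp_minus_one)
qed

end
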